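(* Let $\Gamma$ be a finite collection of supports $\gamma\subseteq\{1,\dots,n\}$, and let $\mathcal N_\Gamma=\circ_{\gamma\in\Gamma}\mathcal N_\gamma$ be a total Pauli channel that is a composition of local Pauli channels $\mathcal N_\gamma$ with supports $\gamma\in\Gamma$, all satisfying Assumption (A). Let a stabilizer (subsystem) code with measured stabilizer subgroup $\mathcal M$ be given. Then, using the syndrome data (i.e. the syndrome expectation values $\Lambda(M)$, $M\in\mathcal M$): 1. The total channel $\mathcal N_\Gamma$ is learnable if and only if every error $e\in\overline{\mathcal E}_\Gamma$ has a syndrome that is nontrivial and distinct from the syndromes of all other errors in $\overline{\mathcal E}_\Gamma$. 2. A given individual channel $\mathcal N_\gamma$ is learnable if and only if every $e\in\mathcal E_\gamma$ produces a syndrome that is nontrivial and unique among the syndromes of all errors in $\mathcal E_\Gamma$. 3. For every nontrivial syndrome class $C\in\mathcal C^*$, the syndrome class error rate $P_C=\sum_{e\in C}p_e$ can be learned up to an $\mathcal O(\|\vec p^{(\Gamma_C)}\|^2)$ deviation, i.e. there is a quantity uniquely determined by the syndrome expectation values that differs from $P_C$ by $\mathcal O(\|\vec p^{(\Gamma_C)}\|^2)$.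
   Context: $\mathcal P_n=\{I,X,Y,Z\}^{\otimes n}$ denotes the $n$-qubit Pauli operators without phases. For $A,B\in\mathcal P_n$, $[[A,B]]=1$ if $A,B$ commute and $-1$ otherwise; $\langle A,B\rangle=0$ if they commute and $1$ otherwise. A Pauli channel acts as $\rho\mapsto\sum_{e\in\mathcal P_n}P(e)e\rho e^\dagger$. For each $\gamma\in\Gamma$, the local channel $\mathcal N_\gamma$ has error distribution $P_\gamma$ on $\mathcal P_n$ with $P_\gamma(e)=0$ unless $\mathrm{supp}(e)\subseteq\gamma$; the total channel is the composition, whose error distribution $P$ is the convolution of the $P_\gamma$ over the Pauli group. Assumption (A): for every $\gamma\in\Gamma$, $P_\gamma(I)>1/2$, and $P_\gamma(e)>0$ for every non-identity $e$ with $\mathrm{supp}(e)\subseteq\gamma$. Let $\mathcal E_\gamma$ be the set of non-identity Paulis supported in $\gamma$; $\mathcal E_\Gamma$ is the disjoint union of the $\mathcal E_\gamma$ (each element $e$ remembers its channel $\gamma_e$, so the same operator from different channels gives distinct elements), and $\overline{\mathcal E}_\Gamma=\bigcup_\gamma\mathcal E_\gamma$ as a set of operators. Local error rates: $p_e=P_{\gamma_e}(e)$ for $e\in\mathcal E_\Gamma$. The code has stabilizer group $\mathcal S$ (the center of the gauge group, an abelian subgroup of $\mathcal P_n$); a codeword is stabilized by $\mathcal S$. Only a subgroup $\mathcal M\le\mathcal S$ generated by measured generators $M_1,\dots,M_m$ is measured. The experiment (prepare a codeword, apply $\mathcal N_\Gamma$, perfectly measure the generators) is repeated; the syndrome statistics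 are equivalently given by the syndrome expectation values $\Lambda(M)=\sum_e P(e)[[e,M]]$ for $M\in\mathcal M$. A quantity is learnable if it is uniquely determined by $(\Lambda(M))_{M\in\mathcal M}$ among all channels of this form (with the given $\Gamma$) satisfying Assumption (A). The syndrome of $e$ is $(\langle e,M\rangle)_{M\in\mathcal M}$ (equivalently its commutation with $M_1,\dots,M_m$); an error is detectable if its syndrome is nontrivial. Syndrome classes are the equivalence classes of $\mathcal E_\Gamma$ under equality of syndromes; $C_0$ is the class of trivial syndrome and $\mathcal C^*$ the set of nontrivial classes. For $C\in\mathcal C^*$, $\Gamma_C=\{\gamma\in\Gamma:\mathcal E_\gamma\cap C\ne\emptyset\}$ and $\vec p^{(\Gamma_C)}$ is the vector of error rates $p_e$ for $e\in\bigcup_{\gamma\in\Gamma_C}\mathcal E_\gamma$. *)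

theory Defs
  imports "HOL-Analysis.Analysis"
begin

datatype pauli = PI | PX | PY | PZ

text \<open>Product of single-qubit Paulis up to phase (the Klein four-group).\<close>
fun pauli_mult :: "pauli \<Rightarrow> pauli \<Rightarrow> pauli" where
  "pauli_mult PI b = b"
| "pauli_mult a PI = a"
| "pauli_mult PX PX = PI" | "pauli_mult PX PY = PZ" | "pauli_mult PX PZ = PY"
| "pauli_mult PY PX = PZ" | "pauli_mult PY PY = PI" | "pauli_mult PY PZ = PX"
| "pauli_mult PZ PX = PY" | "pauli_mult PZ PY = PX" | "pauli_mult PZ PZ = PI"

instantiation pauli :: comm_monoid_mult
begin
definition one_pauli_def: "1 = PI"
definition times_pauli_def: "a * b = pauli_mult a b"
instance
proof
  fix a b c :: pauli
  show "a * b * c = a * (b * c)"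
    unfolding times_pauli_def by (cases a; cases b; cases c) auto
  show "a * b = b * a"
    unfolding times_pauli_def by (cases a; cases b) auto
  show "1 * a = a"
    unfolding times_pauli_def one_pauli_def by simp
qed
end

text \<open>An n-qubit Pauli operator (without phase) is a map from qubit indices to single-qubit
  Paulis that is the identity outside the qubits 0..n-1 (indices are 0-based).\<close>
type_synonym npauli = "nat \<Rightarrow> pauli"

definition pid :: npauli where "pid = (\<lambda>_. PI)"

definition supp :: "npauli \<Rightarrow> nat set" where
  "supp e = {i. e i \<noteq> PI}"

definition paulis :: "nat \<Rightarrow> npauli set" where
  "paulis n = {e. supp e \<subseteq> {..<n}}"

definition supported_in :: "nat set \<Rightarrow> npauli set" where
  "supported_in \<gamma> = {e. supp e \<subseteq> \<gamma>}"

definition pprod :: "('g \<Rightarrow> npauli) \<Rightarrow> 'g set \<Rightarrow> npauli" where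
  "pprod f G = (\<lambda>i. \<Prod>\<gamma>\<in>G. f \<gamma> i)"

definition pmult :: "npauli \<Rightarrow> npauli \<Rightarrow> npauli" where
  "pmult A B = (\<lambda>i. A i * B i)"

text \<open>Symplectic form: anticomm A B is True iff A and B anticommute, i.e. <A,B> = 1.\<close>
definition anticomm :: "npauli \<Rightarrow> npauli \<Rightarrow> bool" where
  "anticomm A B \<longleftrightarrow> odd (card {i. A i \<noteq> PI \<and> B i \<noteq> PI \<and> A i \<noteq> B i})"

definition comm_sign :: "npauli \<Rightarrow> npauli \<Rightarrow> real" where
  "comm_sign A B = (if anticomm A B then -1 else 1)"

text \<open>Error sets: E_gamma (non-identity Paulis supported in gamma), the disjoint union
  E_Gamma (pairs (gamma, e) remembering the channel) and the plain union.\<close>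
definition errs :: "nat set \<Rightarrow> npauli set" where
  "errs \<gamma> = supported_in \<gamma> - {pid}"

definition errs_disj :: "nat set set \<Rightarrow> (nat set \<times> npauli) set" where
  "errs_disj \<Gamma> = Sigma \<Gamma> errs"

definition errs_union :: "nat set set \<Rightarrow> npauli set" where
  "errs_union \<Gamma> = (\<Union>\<gamma>\<in>\<Gamma>. errs \<gamma>)"

definition admissible :: "nat set set \<Rightarrow> (nat set \<Rightarrow> npauli \<Rightarrow> real) \<Rightarrow> bool" where
  "admissible \<Gamma> P \<longleftrightarrow>
     (\<forall>\<gamma>\<in>\<Gamma>. (\<forall>e. P \<gamma> e \<ge> 0)
            \<and> (\<forall>e. e \<notin> supported_in \<gamma> \<longrightarrow> P \<gamma> e = 0)
            \<and> (\<Sum>e\<in>supported_in \<gamma>. P \<gamma> e) = 1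
            \<and> P \<gamma> pid > 1/2
            \<and> (\<forall>e\<in>errs \<gamma>. P \<gamma> e > 0))"

text \<open>Error distribution of the composed channel: convolution over the Pauli group.\<close>
definition total_dist :: "nat set set \<Rightarrow> (nat set \<Rightarrow> npauli \<Rightarrow> real) \<Rightarrow> npauli \<Rightarrow> real" where
  "total_dist \<Gamma> P e =
     (\<Sum>f\<in>(\<Pi>\<^sub>E \<gamma>\<in>\<Gamma>. supported_in \<gamma>).
        if pprod f \<Gamma> = e then (\<Prod>\<gamma>\<in>\<Gamma>. P \<gamma> (f \<gamma>)) else 0)"

definition synd_exp :: "nat \<Rightarrow> nat set set \<Rightarrow> (nat set \<Rightarrow> npauli \<Rightarrow> real) \<Rightarrow> npauli \<Rightarrow> real" where
  "synd_exp n \<Gamma> P M = (\<Sum>e\<in>paulis n. total_dist \<Gamma> P e * comm_sign e M)"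

text \<open>A quantity Q (a function of the local channels) is learnable if it is uniquely
  determined by the syndrome expectation values (Lambda(M)) for M in the measured group,
  among all admissible channel families with the given Gamma.\<close>
definition learnable :: "nat \<Rightarrow> nat set set \<Rightarrow> npauli set \<Rightarrow> ((nat set \<Rightarrow> npauli \<Rightarrow> real) \<Rightarrow> 'a) \<Rightarrow> bool" where
  "learnable n \<Gamma> \<M> Q \<longleftrightarrow>
     (\<forall>P P'. admissible \<Gamma> P \<longrightarrow> admissible \<Gamma> P' \<longrightarrow>
        (\<forall>M\<in>\<M>. synd_exp n \<Gamma> P M = synd_exp n \<Gamma> P' M) \<longrightarrow> Q P = Q P')"

definition syndrome :: "npauli set \<Rightarrow> npauli \<Rightarrow> npauli \<Rightarrow> bool" where
  "syndrome \<M> e = (\<lambda>M. M \<in> \<M> \<and> anticomm e M)"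

definition trivial_syndrome :: "npauli \<Rightarrow> bool" where
  "trivial_syndrome = (\<lambda>_. False)"

definition synd_class :: "nat set set \<Rightarrow> npauli set \<Rightarrow> npauli \<Rightarrow> (nat set \<times> npauli) set" where
  "synd_class \<Gamma> \<M> e0 = {(\<gamma>, e) \<in> errs_disj \<Gamma>. syndrome \<M> e = syndrome \<M> e0}"

definition class_rate :: "(nat set \<times> npauli) set \<Rightarrow> (nat set \<Rightarrow> npauli \<Rightarrow> real) \<Rightarrow> real" where
  "class_rate C P = (\<Sum>(\<gamma>, e)\<in>C. P \<gamma> e)"

definition class_supports :: "(nat set \<times> npauli) set \<Rightarrow> nat set set" where
  "class_supports C = fst ` C"

definition rate_norm_sq :: "nat set set \<Rightarrow> (nat set \<Rightarrow> npauli \<Rightarrow> real) \<Rightarrow> real" where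
  "rate_norm_sq G P = (\<Sum>(\<gamma>, e)\<in>Sigma G errs. (P \<gamma> e)\<^sup>2)"

definition pauli_subgroup :: "nat \<Rightarrow> npauli set \<Rightarrow> bool" where
  "pauli_subgroup n G \<longleftrightarrow> G \<subseteq> paulis n \<and> pid \<in> G \<and> (\<forall>A\<in>G. \<forall>B\<in>G. pmult A B \<in> G)"

definition abelian_pauli_subgroup :: "nat \<Rightarrow> npauli set \<Rightarrow> bool" where
  "abelian_pauli_subgroup n G \<longleftrightarrow> pauli_subgroup n G \<and> (\<forall>A\<in>G. \<forall>B\<in>G. \<not> anticomm A B)"

end

(*
  The syndrome expectation values are the Pauli eigenvalues
  \<Lambda>(M) = \<Prod>\<^sub>\<gamma> \<lambda>\<^sub>\<gamma>(M) of the composed channel at the measured M, and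
  Assumption (A) makes every \<lambda>\<^sub>\<gamma> positive.  Expanding ln \<lambda>\<^sub>\<gamma> in the
  characters of the Paulis supported in \<gamma>, the average
  (1/|\<M>|) \<Sum>\<^sub>M [[e0, M]] ln \<Lambda>(M) is the sum of the log-coefficients of all
  errors in the syndrome class of e0; these class sums are exactly what the data
  determine.  If every error has its own nontrivial syndrome, each class holds a
  single error, so the log-coefficients, and with them the channels, are
  determined.  Conversely, if an error has trivial syndrome or two errors share a
  syndrome, composing the channels with a Pauli flip (and, for errors of different
  channels, the other one with the inverse of a flip) changes the channel but not
  the data.  Finally ln \<lambda> = (\<lambda> - 1) + O(p\<^sup>2), and the linear term projects
  exactly onto the class error rate.
*)

theory Submission
  imports Defs
begin

lemma pauli_UNIV: "(UNIV :: pauli set) = {PI, PX, PY, PZ}"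
  by (auto intro: pauli.exhaust)

lemma finite_pauli_UNIV [simp]: "finite (UNIV :: pauli set)"
  by (simp add: pauli_UNIV)

lemma times_PI_left [simp]: "PI * a = a"
  by (simp add: times_pauli_def)

lemma times_PI_right [simp]: "a * PI = a"
  by (cases a) (simp_all add: times_pauli_def)

lemma pauli_times_self [simp]: "(a :: pauli) * a = PI"
  by (cases a) (simp_all add: times_pauli_def)

lemma pauli_times_eq_PI_iff: "(a :: pauli) * b = PI \<longleftrightarrow> a = b"
  by (cases a; cases b) (simp_all add: times_pauli_def)

lemma pid_apply [simp]: "pid i = PI"
  by (simp add: pid_def)

lemma pmult_apply [simp]: "pmult A B i = A i * B i"
  by (simp add: pmult_def)

lemma pmult_pid [simp]: "pmult A pid = A" "pmult pid A = A"
  by (auto simp: pmult_def)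

lemma pmult_self [simp]: "pmult A A = pid"
  by (auto simp: pmult_def pid_def)

lemma pmult_assoc: "pmult (pmult A B) C = pmult A (pmult B C)"
  by (auto simp: pmult_def mult.assoc)

lemma pmult_cancel_left [simp]: "pmult B (pmult B A) = A"
  by (simp flip: pmult_assoc)

lemma pmult_eq_pid_iff: "pmult A B = pid \<longleftrightarrow> A = B"
  by (auto simp: pmult_def pid_def pauli_times_eq_PI_iff fun_eq_iff)

lemma supported_inD: "A \<in> supported_in S \<Longrightarrow> i \<notin> S \<Longrightarrow> A i = PI"
  unfolding supported_in_def supp_def by blast

lemma supported_inI: "(\<And>i. i \<notin> S \<Longrightarrow> A i = PI) \<Longrightarrow> A \<in> supported_in S"
  unfolding supported_in_def supp_def by blast

lemma pid_supported_in [simp]: "pid \<in> supported_in S"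
  by (simp add: supported_in_def supp_def)

lemma pmult_supported_in:
  "A \<in> supported_in S \<Longrightarrow> B \<in> supported_in S \<Longrightarrow> pmult A B \<in> supported_in S"
  by (rule supported_inI) (auto simp: supported_inD)

lemma supported_in_mono: "S \<subseteq> T \<Longrightarrow> supported_in S \<subseteq> supported_in T"
  by (auto simp: supported_in_def)

lemma finite_supp_if_supported_in: "finite S \<Longrightarrow> A \<in> supported_in S \<Longrightarrow> finite (supp A)"
  by (auto simp: supported_in_def intro: finite_subset)

lemma finite_supp_pmult: "finite (supp A) \<Longrightarrow> finite (supp B) \<Longrightarrow> finite (supp (pmult A B))"
  by (rule finite_subset[of _ "supp A \<union> supp B"]) (auto simp: supp_def)

lemma paulis_eq_supported_in: "paulis n = supported_in {..<n}"
  by (simp add: paulis_def supported_in_def)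

lemma finite_supported_in:
  assumes "finite S"
  shows "finite (supported_in S)"
proof -
  have "supported_in S \<subseteq> (\<lambda>f i. if i \<in> S then f i else PI) ` (S \<rightarrow>\<^sub>E UNIV)"
  proof
    fix A assume A: "A \<in> supported_in S"
    have "A = (\<lambda>i. if i \<in> S then restrict A S i else PI)"
      using supported_inD[OF A] by auto
    then show "A \<in> (\<lambda>f i. if i \<in> S then f i else PI) ` (S \<rightarrow>\<^sub>E UNIV)"
      by (intro image_eqI[of _ _ "restrict A S"]) auto
  qed
  moreover have "finite (S \<rightarrow>\<^sub>E (UNIV :: pauli set))"
    using assms by (intro finite_PiE) auto
  ultimately show ?thesis
    by (meson finite_subset finite_imageI)
qed

definition anticomm1 :: "pauli \<Rightarrow> pauli \<Rightarrow> bool" where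
  "anticomm1 a b \<longleftrightarrow> a \<noteq> PI \<and> b \<noteq> PI \<and> a \<noteq> b"

lemma anticomm1_times_left: "anticomm1 (a * b) c \<longleftrightarrow> anticomm1 a c \<noteq> anticomm1 b c"
  by (cases a; cases b; cases c) (simp_all add: anticomm1_def times_pauli_def)

lemma anticomm_iff_anticomm1: "anticomm A B \<longleftrightarrow> odd (card {i. anticomm1 (A i) (B i)})"
  by (simp add: anticomm_def anticomm1_def)

lemma anticomm_commute: "anticomm A B = anticomm B A"
  unfolding anticomm_def by (rule arg_cong[where f = "\<lambda>X. odd (card X)"]) auto

lemma anticomm_pid [simp]: "\<not> anticomm pid C" "\<not> anticomm C pid"
  by (simp_all add: anticomm_def)

lemma odd_card_sym_diff_iff:
  assumes "finite X" "finite Y"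
  shows "odd (card ((X - Y) \<union> (Y - X))) \<longleftrightarrow> odd (card X) \<noteq> odd (card Y)"
proof -
  have "card X = card (X - Y) + card (X \<inter> Y)" "card Y = card (Y - X) + card (X \<inter> Y)"
    using card_Int_Diff[OF assms(1), of Y] card_Int_Diff[OF assms(2), of X] by (simp_all add: Int_commute)
  moreover have "card ((X - Y) \<union> (Y - X)) = card (X - Y) + card (Y - X)"
    using assms by (intro card_Un_disjoint) auto
  ultimately show ?thesis
    by auto
qed

lemma anticomm_pmult_left:
  assumes "finite (supp C)"
  shows "anticomm (pmult A B) C \<longleftrightarrow> anticomm A C \<noteq> anticomm B C"
proof -
  let ?X = "{i. anticomm1 (A i) (C i)}" and ?Y = "{i. anticomm1 (B i) (C i)}"
  have "?X \<subseteq> supp C" "?Y \<subseteq> supp C"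
    by (auto simp: supp_def anticomm1_def)
  then have "finite ?X" "finite ?Y"
    using assms by (auto intro: finite_subset)
  moreover have "{i. anticomm1 (pmult A B i) (C i)} = (?X - ?Y) \<union> (?Y - ?X)"
    by (auto simp: anticomm1_times_left)
  ultimately show ?thesis
    by (simp add: anticomm_iff_anticomm1 odd_card_sym_diff_iff)
qed

lemma comm_sign_commute: "comm_sign A B = comm_sign B A"
  by (simp add: comm_sign_def anticomm_commute)

lemma comm_sign_pid [simp]: "comm_sign pid C = 1" "comm_sign C pid = 1"
  by (simp_all add: comm_sign_def)

lemma comm_sign_times_self [simp]: "comm_sign A B * comm_sign A B = 1"
  by (simp add: comm_sign_def)

lemma comm_sign_cases: "comm_sign A B \<in> {-1, 1}"
  by (simp add: comm_sign_def)

lemma abs_comm_sign [simp]: "\<bar>comm_sign A B\<bar> = 1"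
  by (simp add: comm_sign_def)

lemma comm_sign_pmult_left:
  "finite (supp C) \<Longrightarrow> comm_sign (pmult A B) C = comm_sign A C * comm_sign B C"
  by (auto simp: comm_sign_def anticomm_pmult_left)

lemma comm_sign_pmult_right:
  "finite (supp C) \<Longrightarrow> comm_sign C (pmult A B) = comm_sign C A * comm_sign C B"
  by (simp add: comm_sign_commute[of C] comm_sign_pmult_left)

definition pauli_restrict :: "nat set \<Rightarrow> npauli \<Rightarrow> npauli" where
  "pauli_restrict S A = (\<lambda>i. if i \<in> S then A i else PI)"

lemma pauli_restrict_supported_in [simp]: "pauli_restrict S A \<in> supported_in S"
  by (auto simp: pauli_restrict_def intro: supported_inI)

lemma anticomm_pauli_restrict:
  assumes "e \<in> supported_in S"
  shows "anticomm e (pauli_restrict S A) \<longleftrightarrow> anticomm e A"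
proof -
  have "{i. anticomm1 (e i) (pauli_restrict S A i)} = {i. anticomm1 (e i) (A i)}"
    using supported_inD[OF assms] by (auto simp: pauli_restrict_def anticomm1_def)
  then show ?thesis
    by (simp add: anticomm_iff_anticomm1)
qed

lemma comm_sign_pauli_restrict:
  "e \<in> supported_in S \<Longrightarrow> comm_sign e (pauli_restrict S A) = comm_sign e A"
  by (simp add: comm_sign_def anticomm_pauli_restrict)

definition single_qubit :: "nat \<Rightarrow> pauli \<Rightarrow> npauli" where
  "single_qubit i b = (\<lambda>j. if j = i then b else PI)"

lemma exists_anticomm_supported_in:
  assumes A: "A \<in> supported_in S" and "A \<noteq> pid"
  shows "\<exists>B\<in>supported_in S. anticomm A B"
proof -
  obtain i where i: "A i \<noteq> PI"
    using \<open>A \<noteq> pid\<close> by (auto simp: pid_def fun_eq_iff)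
  define B where "B = single_qubit i (if A i = PX then PZ else PX)"
  have "{j. anticomm1 (A j) (B j)} = {i}"
    using i by (auto simp: B_def single_qubit_def anticomm1_def)
  then have "anticomm A B"
    by (simp add: anticomm_iff_anticomm1)
  moreover have "B \<in> supported_in S"
    using supported_inD[OF A] i by (auto simp: B_def single_qubit_def intro!: supported_inI)
  ultimately show ?thesis
    by blast
qed

lemma supported_in_separating:
  assumes S: "finite S" and "A \<in> supported_in S" "A' \<in> supported_in S" "A \<noteq> A'"
  shows "\<exists>B\<in>supported_in S. anticomm A B \<noteq> anticomm A' B"
proof -
  obtain B where B: "B \<in> supported_in S" "anticomm (pmult A A') B"
    using exists_anticomm_supported_in[of "pmult A A'" S] assms
    by (auto simp: pmult_supported_in pmult_eq_pid_iff)
  then show ?thesis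
    using anticomm_pmult_left[OF finite_supp_if_supported_in[OF S B(1)]] by blast
qed

section \<open>Fourier analysis on the Paulis supported in a set\<close>

lemma sum_comm_sign_eq_0:
  assumes T: "finite T" and closed: "\<And>A. A \<in> T \<Longrightarrow> pmult B A \<in> T"
    and "anticomm C B" and "finite (supp C)"
  shows "(\<Sum>A\<in>T. comm_sign C A) = 0"
proof -
  have "(\<Sum>A\<in>T. comm_sign C A) = (\<Sum>A\<in>T. comm_sign C (pmult B A))"
    by (rule sum.reindex_bij_witness[where i="pmult B" and j="pmult B"]) (auto intro: closed)
  also have "\<dots> = (\<Sum>A\<in>T. comm_sign C B * comm_sign C A)"
    by (simp add: comm_sign_pmult_right[OF assms(4)])
  also have "\<dots> = - (\<Sum>A\<in>T. comm_sign C A)"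
    using assms(3) by (simp add: comm_sign_def sum_negf)
  finally show ?thesis
    by simp
qed

lemma sum_comm_sign_supported_in:
  assumes S: "finite S" and B: "B \<in> supported_in S" and C: "C \<in> supported_in S"
  shows "(\<Sum>A\<in>supported_in S. comm_sign A B * comm_sign A C)
          = (if B = C then real (card (supported_in S)) else 0)"
proof -
  have "(\<Sum>A\<in>supported_in S. comm_sign A B * comm_sign A C)
        = (\<Sum>A\<in>supported_in S. comm_sign (pmult B C) A)"
    by (rule sum.cong)
      (auto simp: comm_sign_pmult_right comm_sign_commute finite_supp_if_supported_in[OF S])
  moreover have "(\<Sum>A\<in>supported_in S. comm_sign (pmult B C) A) = 0" if "B \<noteq> C"
  proof -
    have BC: "pmult B C \<in> supported_in S" "pmult B C \<noteq> pid"
      using B C that by (simp_all add: pmult_supported_in pmult_eq_pid_iff)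
    then obtain D where "D \<in> supported_in S" "anticomm (pmult B C) D"
      using exists_anticomm_supported_in by blast
    with BC show ?thesis
      by (intro sum_comm_sign_eq_0[where B = D])
        (auto simp: finite_supported_in[OF S] pmult_supported_in finite_supp_if_supported_in[OF S])
  qed
  ultimately show ?thesis
    by auto
qed

(* For a local error distribution q on \<gamma>, pauli_transform \<gamma> q A is the eigenvalue
   of the Pauli channel on the operator A. *)
definition pauli_transform :: "nat set \<Rightarrow> (npauli \<Rightarrow> real) \<Rightarrow> npauli \<Rightarrow> real" where
  "pauli_transform S q A = (\<Sum>x\<in>supported_in S. q x * comm_sign x A)"

definition fourier_coeff :: "nat set \<Rightarrow> (npauli \<Rightarrow> real) \<Rightarrow> npauli \<Rightarrow> real" where
  "fourier_coeff S g e = (\<Sum>B\<in>supported_in S. g B * comm_sign e B) / real (card (supported_in S))"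

lemma card_supported_in_pos: "finite S \<Longrightarrow> card (supported_in S) > 0"
  using finite_supported_in card_gt_0_iff pid_supported_in by blast

lemma pauli_transform_pauli_restrict:
  "pauli_transform S q (pauli_restrict S A) = pauli_transform S q A"
  unfolding pauli_transform_def by (rule sum.cong) (auto simp: comm_sign_pauli_restrict)

lemma fourier_coeff_pauli_transform:
  assumes S: "finite S" and e: "e \<in> supported_in S"
  shows "fourier_coeff S (pauli_transform S q) e = q e"
proof -
  let ?V = "supported_in S"
  have "(\<Sum>B\<in>?V. pauli_transform S q B * comm_sign e B)
      = (\<Sum>x\<in>?V. q x * (\<Sum>B\<in>?V. comm_sign B x * comm_sign B e))"
    unfolding pauli_transform_def sum_distrib_right sum_distrib_left
    by (subst sum.swap) (simp add: comm_sign_commute mult.assoc)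
  also have "\<dots> = (\<Sum>x\<in>?V. if x = e then q x * real (card ?V) else 0)"
    by (rule sum.cong) (auto simp: sum_comm_sign_supported_in[OF S _ e])
  also have "\<dots> = q e * real (card ?V)"
    using e by (simp add: finite_supported_in[OF S])
  finally show ?thesis
    using card_supported_in_pos[OF S] by (simp add: fourier_coeff_def)
qed

lemma pauli_transform_inj:
  assumes S: "finite S"
    and q: "\<And>x. x \<notin> supported_in S \<Longrightarrow> q x = 0" and q': "\<And>x. x \<notin> supported_in S \<Longrightarrow> q' x = 0"
    and eq: "\<And>A. A \<in> supported_in S \<Longrightarrow> pauli_transform S q A = pauli_transform S q' A"
  shows "q = q'"
proof
  fix x
  show "q x = q' x"
  proof (cases "x \<in> supported_in S")
    case True
    have "fourier_coeff S (pauli_transform S q) x = fourier_coeff S (pauli_transform S q') x"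
      unfolding fourier_coeff_def using eq by (simp cong: sum.cong)
    then show ?thesis
      using True by (simp add: fourier_coeff_pauli_transform[OF S])
  qed (simp add: q q')
qed

lemma fourier_expansion:
  assumes S: "finite S" and g: "\<And>A. g (pauli_restrict S A) = g A"
  shows "g A = (\<Sum>e\<in>supported_in S. fourier_coeff S g e * comm_sign e A)"
proof -
  let ?V = "supported_in S" and ?A = "pauli_restrict S A"
  have "(\<Sum>e\<in>?V. fourier_coeff S g e * comm_sign e A)
      = (\<Sum>B\<in>?V. g B * (\<Sum>e\<in>?V. comm_sign e B * comm_sign e ?A)) / real (card ?V)"
    unfolding fourier_coeff_def sum_divide_distrib sum_distrib_left sum_distrib_right
    by (subst sum.swap) (simp add: comm_sign_pauli_restrict mult.assoc)
  also have "\<dots> = (\<Sum>B\<in>?V. if B = ?A then g B * real (card ?V) else 0) / real (card ?V)"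
    by (intro arg_cong[where f = "\<lambda>t. t / _"] sum.cong)
      (auto simp: sum_comm_sign_supported_in[OF S])
  also have "\<dots> = g ?A"
    using card_supported_in_pos[OF S] by (simp add: finite_supported_in[OF S] del: of_nat_eq_0_iff)
  finally show ?thesis
    by (simp add: g)
qed

lemma syndrome_pid [simp]: "syndrome \<M> pid = trivial_syndrome"
  by (simp add: syndrome_def trivial_syndrome_def fun_eq_iff)

lemma syndrome_eq_iff: "syndrome \<M> x = syndrome \<M> y \<longleftrightarrow> (\<forall>m\<in>\<M>. anticomm x m = anticomm y m)"
  by (auto simp: syndrome_def fun_eq_iff)

lemma syndrome_eq_trivial_iff: "syndrome \<M> x = trivial_syndrome \<longleftrightarrow> (\<forall>m\<in>\<M>. \<not> anticomm x m)"
  using syndrome_eq_iff[of \<M> x pid] by simp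

lemma finite_pauli_subgroup: "pauli_subgroup n \<M> \<Longrightarrow> finite \<M>"
  unfolding pauli_subgroup_def paulis_eq_supported_in
  using finite_supported_in[of "{..<n}"] finite_subset by blast

lemma card_pauli_subgroup_pos: "pauli_subgroup n \<M> \<Longrightarrow> card \<M> > 0"
  using finite_pauli_subgroup card_gt_0_iff by (auto simp: pauli_subgroup_def)

lemma finite_supp_if_pauli_subgroup: "pauli_subgroup n \<M> \<Longrightarrow> m \<in> \<M> \<Longrightarrow> finite (supp m)"
  unfolding pauli_subgroup_def paulis_eq_supported_in by (auto intro: finite_supp_if_supported_in)

lemma syndrome_pmult_eq_trivial:
  assumes "pauli_subgroup n \<M>" "syndrome \<M> x = syndrome \<M> y"
  shows "syndrome \<M> (pmult x y) = trivial_syndrome"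
  unfolding syndrome_eq_trivial_iff
proof
  fix m assume "m \<in> \<M>"
  then show "\<not> anticomm (pmult x y) m"
    using assms by (simp add: syndrome_eq_iff anticomm_pmult_left finite_supp_if_pauli_subgroup)
qed

lemma comm_sign_eq_if_syndrome_eq:
  "syndrome \<M> x = syndrome \<M> y \<Longrightarrow> m \<in> \<M> \<Longrightarrow> comm_sign x m = comm_sign y m"
  by (auto simp: syndrome_eq_iff comm_sign_def)

lemma sum_comm_sign_pauli_subgroup:
  assumes \<M>: "pauli_subgroup n \<M>" and x: "finite (supp x)" and y: "finite (supp y)"
  shows "(\<Sum>m\<in>\<M>. comm_sign x m * comm_sign y m)
        = (if syndrome \<M> x = syndrome \<M> y then real (card \<M>) else 0)"
proof (cases "syndrome \<M> x = syndrome \<M> y")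
  case True
  then have "(\<Sum>m\<in>\<M>. comm_sign x m * comm_sign y m) = (\<Sum>m\<in>\<M>. comm_sign y m * comm_sign y m)"
    by (intro sum.cong refl) (simp add: comm_sign_eq_if_syndrome_eq[OF True])
  with True show ?thesis
    by simp
next
  case False
  then obtain m0 where m0: "m0 \<in> \<M>" "anticomm x m0 \<noteq> anticomm y m0"
    by (auto simp: syndrome_eq_iff)
  have "(\<Sum>m\<in>\<M>. comm_sign x m * comm_sign y m) = (\<Sum>m\<in>\<M>. comm_sign (pmult x y) m)"
    by (rule sum.cong) (auto simp: comm_sign_pmult_left finite_supp_if_pauli_subgroup[OF \<M>])
  also have "\<dots> = 0"
  proof (rule sum_comm_sign_eq_0[where B = m0])
    show "finite \<M>" "\<And>m. m \<in> \<M> \<Longrightarrow> pmult m0 m \<in> \<M>"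
      using \<M> m0(1) by (auto simp: pauli_subgroup_def finite_pauli_subgroup)
    show "anticomm (pmult x y) m0"
      using m0 by (simp add: anticomm_pmult_left finite_supp_if_pauli_subgroup[OF \<M>])
    show "finite (supp (pmult x y))"
      using x y by (rule finite_supp_pmult)
  qed
  finally show ?thesis
    using False by simp
qed

lemma sum_comm_sign_nontrivial:
  assumes "pauli_subgroup n \<M>" "finite (supp x)" "syndrome \<M> x \<noteq> trivial_syndrome"
  shows "(\<Sum>m\<in>\<M>. comm_sign x m) = 0"
  using sum_comm_sign_pauli_subgroup[OF assms(1,2), of pid] assms(3) by (simp add: supp_def)

lemma syndrome_projection:
  assumes \<M>: "pauli_subgroup n \<M>" and S: "finite S" and g: "\<And>A. g (pauli_restrict S A) = g A"
    and e0: "finite (supp e0)"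
  shows "(\<Sum>m\<in>\<M>. comm_sign e0 m * g m)
       = real (card \<M>) * (\<Sum>e\<in>{e\<in>supported_in S. syndrome \<M> e = syndrome \<M> e0}. fourier_coeff S g e)"
proof -
  let ?V = "supported_in S"
  have "comm_sign e0 m * g m = (\<Sum>e\<in>?V. fourier_coeff S g e * (comm_sign e m * comm_sign e0 m))"
    for m
  proof -
    have "comm_sign e0 m * g m = (\<Sum>e\<in>?V. fourier_coeff S g e * comm_sign e m) * comm_sign e0 m"
      by (subst fourier_expansion[where g = g, OF S g]) (rule mult.commute)
    then show ?thesis
      by (simp add: sum_distrib_right mult.assoc)
  qed
  then have "(\<Sum>m\<in>\<M>. comm_sign e0 m * g m)
      = (\<Sum>m\<in>\<M>. \<Sum>e\<in>?V. fourier_coeff S g e * (comm_sign e m * comm_sign e0 m))"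
    by simp
  also have "\<dots> = (\<Sum>e\<in>?V. fourier_coeff S g e * (\<Sum>m\<in>\<M>. comm_sign e m * comm_sign e0 m))"
    by (subst sum.swap) (simp add: sum_distrib_left)
  also have "\<dots> = (\<Sum>e\<in>?V. real (card \<M>) * (if syndrome \<M> e = syndrome \<M> e0 then fourier_coeff S g e else 0))"
    by (rule sum.cong)
      (auto simp: sum_comm_sign_pauli_subgroup[OF \<M> finite_supp_if_supported_in[OF S] e0])
  also have "\<dots> = real (card \<M>) * (\<Sum>e\<in>?V. if syndrome \<M> e = syndrome \<M> e0 then fourier_coeff S g e else 0)"
    by (rule sum_distrib_left[symmetric])
  finally show ?thesis
    by (simp only: sum.inter_filter[OF finite_supported_in[OF S]])
qed

lemma syndrome_class_in_supported_in:
  "syndrome \<M> e0 \<noteq> trivial_syndrome \<Longrightarrow>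
     {e\<in>supported_in \<gamma>. syndrome \<M> e = syndrome \<M> e0} = {e\<in>errs \<gamma>. syndrome \<M> e = syndrome \<M> e0}"
  by (auto simp: errs_def)

lemma syndrome_class_eq_if_unique_in_disj:
  assumes "\<gamma> \<in> \<Gamma>" "e0 \<in> errs \<gamma>0" and nontrivial: "syndrome \<M> e0 \<noteq> trivial_syndrome"
    and distinct: "\<forall>(\<gamma>', e')\<in>errs_disj \<Gamma>. (\<gamma>', e') \<noteq> (\<gamma>0, e0) \<longrightarrow> syndrome \<M> e' \<noteq> syndrome \<M> e0"
  shows "{e\<in>supported_in \<gamma>. syndrome \<M> e = syndrome \<M> e0} = (if \<gamma> = \<gamma>0 then {e0} else {})"
proof -
  have "\<gamma> = \<gamma>0 \<and> e = e0" if e: "e \<in> supported_in \<gamma>" "syndrome \<M> e = syndrome \<M> e0" for e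
  proof -
    have "e \<noteq> pid"
      using nontrivial e(2) by auto
    then have "(\<gamma>, e) \<in> errs_disj \<Gamma>"
      using \<open>\<gamma> \<in> \<Gamma>\<close> e(1) by (simp add: errs_disj_def errs_def)
    then show ?thesis
      using bspec[OF distinct] e(2) by auto
  qed
  then show ?thesis
    using \<open>e0 \<in> errs \<gamma>0\<close> by (auto simp: errs_def)
qed

lemma syndrome_class_eq_if_unique_in_union:
  assumes unique: "\<forall>e\<in>errs_union \<Gamma>. syndrome \<M> e \<noteq> trivial_syndrome \<and>
           (\<forall>e'\<in>errs_union \<Gamma>. e' \<noteq> e \<longrightarrow> syndrome \<M> e' \<noteq> syndrome \<M> e)"
    and e0: "e0 \<in> insert pid (errs_union \<Gamma>)" and "\<gamma> \<in> \<Gamma>"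
  shows "{e\<in>supported_in \<gamma>. syndrome \<M> e = syndrome \<M> e0} = (if e0 \<in> supported_in \<gamma> then {e0} else {})"
proof -
  have "e = e0" if e: "e \<in> supported_in \<gamma>" "syndrome \<M> e = syndrome \<M> e0" for e
  proof (rule ccontr)
    assume "e \<noteq> e0"
    have "e \<in> insert pid (errs_union \<Gamma>)"
      using e(1) \<open>\<gamma> \<in> \<Gamma>\<close> by (auto simp: errs_union_def errs_def)
    with \<open>e \<noteq> e0\<close> e0 consider "e = pid" "e0 \<in> errs_union \<Gamma>" | "e \<in> errs_union \<Gamma>" "e0 = pid"
      | "e \<in> errs_union \<Gamma>" "e0 \<in> errs_union \<Gamma>"
      by blast
    then show False
      by cases (use unique e(2) \<open>e \<noteq> e0\<close> in auto)
  qed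
  then show ?thesis
    by auto
qed

lemma synd_class_eq_Sigma:
  "synd_class \<Gamma> \<M> e0 = Sigma \<Gamma> (\<lambda>\<gamma>. {e\<in>errs \<gamma>. syndrome \<M> e = syndrome \<M> e0})"
  by (auto simp: synd_class_def errs_disj_def)

lemma class_supports_synd_class:
  "class_supports (synd_class \<Gamma> \<M> e0) = {\<gamma>\<in>\<Gamma>. {e\<in>errs \<gamma>. syndrome \<M> e = syndrome \<M> e0} \<noteq> {}}"
  by (auto simp: class_supports_def synd_class_eq_Sigma image_iff)

lemma class_supports_synd_class_subset: "class_supports (synd_class \<Gamma> \<M> e0) \<subseteq> \<Gamma>"
  by (auto simp: class_supports_synd_class)

definition local_admissible :: "nat set \<Rightarrow> (npauli \<Rightarrow> real) \<Rightarrow> bool" where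
  "local_admissible \<gamma> q \<longleftrightarrow>
     (\<forall>e. q e \<ge> 0) \<and> (\<forall>e. e \<notin> supported_in \<gamma> \<longrightarrow> q e = 0) \<and> (\<Sum>e\<in>supported_in \<gamma>. q e) = 1
     \<and> q pid > 1/2 \<and> (\<forall>e\<in>errs \<gamma>. q e > 0)"

lemma admissible_iff_local_admissible: "admissible \<Gamma> P \<longleftrightarrow> (\<forall>\<gamma>\<in>\<Gamma>. local_admissible \<gamma> (P \<gamma>))"
  by (simp add: admissible_def local_admissible_def)

lemma admissible_fun_upd:
  "admissible \<Gamma> P \<Longrightarrow> local_admissible \<gamma> q \<Longrightarrow> admissible \<Gamma> (P(\<gamma> := q))"
  by (simp add: admissible_iff_local_admissible)

context
  fixes \<gamma> :: "nat set" and q :: "npauli \<Rightarrow> real"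
  assumes q: "local_admissible \<gamma> q" and finite_\<gamma>: "finite \<gamma>"
begin

lemma local_admissible_nonneg: "q e \<ge> 0"
  and local_admissible_outside: "e \<notin> supported_in \<gamma> \<Longrightarrow> q e = 0"
  and local_admissible_sum: "(\<Sum>e\<in>supported_in \<gamma>. q e) = 1"
  and local_admissible_pid: "q pid > 1/2"
  and local_admissible_errs_pos: "e \<in> errs \<gamma> \<Longrightarrow> q e > 0"
  using q by (auto simp: local_admissible_def)

lemma local_admissible_pos: "e \<in> supported_in \<gamma> \<Longrightarrow> q e > 0"
  using local_admissible_pid local_admissible_errs_pos[of e] by (cases "e = pid") (auto simp: errs_def)

lemma sum_supported_in_eq_pid_plus_errs:
  "(\<Sum>e\<in>supported_in \<gamma>. g e) = g pid + (\<Sum>e\<in>errs \<gamma>. g e)"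
  unfolding errs_def by (simp add: sum.remove[OF finite_supported_in[OF finite_\<gamma>] pid_supported_in])

lemma sum_errs_local_admissible: "(\<Sum>e\<in>errs \<gamma>. q e) = 1 - q pid"
  using sum_supported_in_eq_pid_plus_errs[of q] local_admissible_sum by simp

lemma local_admissible_add_le_1:
  assumes "x \<in> supported_in \<gamma>" "y \<in> supported_in \<gamma>" "x \<noteq> y"
  shows "q x + q y \<le> 1"
proof -
  have "(\<Sum>e\<in>{x, y}. q e) \<le> (\<Sum>e\<in>supported_in \<gamma>. q e)"
    using assms by (intro sum_mono2) (auto simp: local_admissible_nonneg finite_supported_in[OF finite_\<gamma>])
  then show ?thesis
    using assms(3) local_admissible_sum by simp
qed

lemma local_admissible_le_1: "q x \<le> 1"
proof (cases "x \<in> supported_in \<gamma>")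
  case True
  then have "q x \<le> (\<Sum>e\<in>supported_in \<gamma>. q e)"
    by (intro member_le_sum) (auto simp: local_admissible_nonneg finite_supported_in[OF finite_\<gamma>])
  then show ?thesis
    by (simp add: local_admissible_sum)
qed (simp add: local_admissible_outside)

lemma pauli_transform_local_admissible_pid: "pauli_transform \<gamma> q pid = 1"
  by (simp add: pauli_transform_def local_admissible_sum)

lemma pauli_transform_local_admissible_ge: "pauli_transform \<gamma> q A \<ge> 2 * q pid - 1"
proof -
  have "(\<Sum>e\<in>errs \<gamma>. - q e) \<le> (\<Sum>e\<in>errs \<gamma>. q e * comm_sign e A)"
    by (rule sum_mono) (auto simp: comm_sign_def local_admissible_nonneg)
  then show ?thesis
    unfolding pauli_transform_def sum_supported_in_eq_pid_plus_errs
    by (simp add: sum_negf sum_errs_local_admissible)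
qed

lemma pauli_transform_local_admissible_pos: "pauli_transform \<gamma> q A > 0"
  using pauli_transform_local_admissible_ge[of A] local_admissible_pid by linarith

lemma pauli_transform_local_admissible_le_1: "pauli_transform \<gamma> q A \<le> 1"
proof -
  have "pauli_transform \<gamma> q A \<le> (\<Sum>e\<in>supported_in \<gamma>. q e)"
    unfolding pauli_transform_def
    by (rule sum_mono) (auto simp: comm_sign_def local_admissible_nonneg)
  then show ?thesis
    by (simp add: local_admissible_sum)
qed

end

lemma exists_local_admissible:
  assumes "finite \<gamma>"
  shows "\<exists>q. local_admissible \<gamma> q"
proof -
  define N where "N = real (card (supported_in \<gamma>))"
  define q where "q e = (if e \<in> supported_in \<gamma> then if e = pid then 1 - (N - 1) / (4 * N) else 1 / (4 * N) else 0)" for e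
  have N: "N \<ge> 1"
    using card_supported_in_pos[OF assms] by (simp add: N_def)
  have card_errs: "real (card (errs \<gamma>)) = N - 1"
    using card_supported_in_pos[OF assms] finite_supported_in[OF assms]
    by (simp add: errs_def N_def card_Diff_singleton of_nat_diff)
  have "(\<Sum>e\<in>errs \<gamma>. q e) = (N - 1) / (4 * N)"
    using card_errs by (simp add: q_def errs_def)
  moreover have "(N - 1) / (4 * N) \<le> 1/4"
    using N by (simp add: field_simps)
  ultimately have "local_admissible \<gamma> q"
    using N sum.remove[OF finite_supported_in[OF assms] pid_supported_in, of q]
    by (auto simp: local_admissible_def q_def errs_def)
  then show ?thesis
    by blast
qed

section \<open>Pauli flips\<close>

(* The channel q followed by the quasi-channel \<rho> \<mapsto> a \<rho> + b f \<rho> f: a flip by f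
   with probability u for (a, b) = (1 - u, u), and the inverse of that flip for
   (a, b) = ((1 - u) / (1 - 2 u), - u / (1 - 2 u)). *)
definition compose_flip :: "npauli \<Rightarrow> real \<Rightarrow> real \<Rightarrow> (npauli \<Rightarrow> real) \<Rightarrow> npauli \<Rightarrow> real" where
  "compose_flip f a b q = (\<lambda>x. a * q x + b * q (pmult f x))"

lemma sum_supported_in_pmult:
  assumes "f \<in> supported_in S"
  shows "(\<Sum>x\<in>supported_in S. g (pmult f x)) = (\<Sum>x\<in>supported_in S. g x)"
  by (rule sum.reindex_bij_witness[where i = "pmult f" and j = "pmult f"])
    (auto intro: pmult_supported_in[OF assms])

lemma pmult_not_supported_in:
  assumes "f \<in> supported_in S" "x \<notin> supported_in S"
  shows "pmult f x \<notin> supported_in S"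
  using pmult_supported_in[OF assms(1), of "pmult f x"] assms(2) by auto

lemma compose_flip_outside:
  assumes "f \<in> supported_in S" "\<And>y. y \<notin> supported_in S \<Longrightarrow> q y = 0" "x \<notin> supported_in S"
  shows "compose_flip f a b q x = 0"
  using assms pmult_not_supported_in[OF assms(1,3)] by (simp add: compose_flip_def)

lemma sum_compose_flip:
  assumes "f \<in> supported_in S"
  shows "(\<Sum>x\<in>supported_in S. compose_flip f a b q x) = (a + b) * (\<Sum>x\<in>supported_in S. q x)"
  unfolding compose_flip_def sum.distrib sum_distrib_left[symmetric] sum_supported_in_pmult[OF assms]
  by (simp add: algebra_simps)

lemma pauli_transform_compose_flip:
  assumes f: "f \<in> supported_in S" and A: "finite (supp A)"
  shows "pauli_transform S (compose_flip f a b q) A = (a + b * comm_sign f A) * pauli_transform S q A"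
proof -
  have "(\<Sum>x\<in>supported_in S. q (pmult f x) * comm_sign x A)
      = (\<Sum>x\<in>supported_in S. q (pmult f (pmult f x)) * comm_sign (pmult f x) A)"
    by (rule sum_supported_in_pmult[OF f, symmetric])
  also have "\<dots> = comm_sign f A * pauli_transform S q A"
    by (simp add: pauli_transform_def comm_sign_pmult_left[OF A] sum_distrib_left mult_ac)
  moreover have "pauli_transform S (compose_flip f a b q) A
      = a * pauli_transform S q A + b * (\<Sum>x\<in>supported_in S. q (pmult f x) * comm_sign x A)"
    unfolding pauli_transform_def compose_flip_def distrib_right sum.distrib
    by (simp add: sum_distrib_left mult.assoc)
  ultimately show ?thesis
    by (simp add: algebra_simps)
qed

lemma compose_deflip_eq:
  "c \<noteq> 0 \<Longrightarrow> compose_flip f ((1 - u) / c) (- u / c) q x = ((1 - u) * q x - u * q (pmult f x)) / c"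
  by (simp add: compose_flip_def field_simps)

context
  fixes \<gamma> :: "nat set" and q :: "npauli \<Rightarrow> real"
  assumes q: "local_admissible \<gamma> q" and finite_\<gamma>: "finite \<gamma>"
begin

lemma local_admissible_flip:
  assumes f: "f \<in> supported_in \<gamma>" and u: "0 \<le> u" "2 * u \<le> q pid - 1/2"
  shows "local_admissible \<gamma> (compose_flip f (1 - u) u q)"
  unfolding local_admissible_def
proof (intro conjI allI ballI impI)
  have "u \<le> 1/4"
    using u local_admissible_le_1[OF q finite_\<gamma>, of pid] by simp
  then have nonneg: "(1 - u) * q x \<ge> 0" "u * q x \<ge> 0" for x
    using u local_admissible_nonneg[OF q finite_\<gamma>, of x] by simp_all
  then show "compose_flip f (1 - u) u q x \<ge> 0" for x
    by (simp add: compose_flip_def)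
  show "compose_flip f (1 - u) u q x = 0" if "x \<notin> supported_in \<gamma>" for x
    by (rule compose_flip_outside[OF f local_admissible_outside[OF q finite_\<gamma>] that])
  show "(\<Sum>x\<in>supported_in \<gamma>. compose_flip f (1 - u) u q x) = 1"
    by (simp add: sum_compose_flip[OF f] local_admissible_sum[OF q finite_\<gamma>])
  have "(1 - u) * q pid \<ge> q pid - u"
    using u local_admissible_le_1[OF q finite_\<gamma>, of pid] by (simp add: algebra_simps mult_left_le)
  moreover have "q pid - u > 1/2"
    using u local_admissible_pid[OF q finite_\<gamma>] by linarith
  ultimately show "compose_flip f (1 - u) u q pid > 1/2"
    using nonneg(2)[of f] by (simp add: compose_flip_def)
  show "compose_flip f (1 - u) u q e > 0" if "e \<in> errs \<gamma>" for e
    using \<open>u \<le> 1/4\<close> local_admissible_errs_pos[OF q finite_\<gamma> that] nonneg(2)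
    by (simp add: compose_flip_def add_pos_nonneg)
qed

lemma compose_deflip_pos:
  assumes u: "0 < u" and small: "\<forall>x\<in>supported_in \<gamma>. 4 * u \<le> q x" and x: "x \<in> supported_in \<gamma>"
  shows "compose_flip f ((1 - u) / (1 - 2 * u)) (- u / (1 - 2 * u)) q x > 0"
proof -
  have "u \<le> 1/4"
    using small[rule_format, OF pid_supported_in] local_admissible_le_1[OF q finite_\<gamma>, of pid] by simp
  have "(1 - u) * q x \<ge> (1 - u) * (4 * u)"
    using small x \<open>u \<le> 1/4\<close> by (intro mult_left_mono) auto
  moreover have "u * q (pmult f x) \<le> u"
    using u local_admissible_le_1[OF q finite_\<gamma>] by (simp add: mult_left_le)
  moreover have "(1 - u) * (4 * u) > u"
    using u \<open>u \<le> 1/4\<close> by (simp add: algebra_simps)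
  ultimately have "(1 - u) * q x - u * q (pmult f x) > 0"
    by linarith
  then show ?thesis
    using compose_deflip_eq[of "1 - 2 * u"] \<open>u \<le> 1/4\<close> by simp
qed

lemma compose_deflip_pid:
  assumes f: "f \<in> errs \<gamma>" and u: "0 < u" "u \<le> 1/4"
  shows "compose_flip f ((1 - u) / (1 - 2 * u)) (- u / (1 - 2 * u)) q pid > 1/2"
proof -
  have "pid \<noteq> f" "f \<in> supported_in \<gamma>"
    using f by (auto simp: errs_def)
  then have "q (pmult f pid) \<le> 1 - q pid"
    using local_admissible_add_le_1[OF q finite_\<gamma> pid_supported_in] by fastforce
  then have "u * q (pmult f pid) \<le> u * (1 - q pid)"
    using u by (intro mult_left_mono) auto
  then have "(1 - u) * q pid - u * q (pmult f pid) \<ge> q pid - u"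
    by (simp add: algebra_simps)
  then have "(1 - u) * q pid - u * q (pmult f pid) > 1/2 - u"
    using local_admissible_pid[OF q finite_\<gamma>] by linarith
  moreover have "compose_flip f ((1 - u) / (1 - 2 * u)) (- u / (1 - 2 * u)) q pid
      = ((1 - u) * q pid - u * q (pmult f pid)) / (1 - 2 * u)"
    using compose_deflip_eq[of "1 - 2 * u"] u by simp
  ultimately show ?thesis
    using u by (simp only:) (simp add: field_simps)
qed

lemma local_admissible_deflip:
  assumes f: "f \<in> errs \<gamma>" and u: "0 < u" and small: "\<forall>x\<in>supported_in \<gamma>. 4 * u \<le> q x"
  shows "local_admissible \<gamma> (compose_flip f ((1 - u) / (1 - 2 * u)) (- u / (1 - 2 * u)) q)"
  unfolding local_admissible_def
proof (intro conjI allI ballI impI)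
  have fV: "f \<in> supported_in \<gamma>"
    using f by (simp add: errs_def)
  have "u \<le> 1/4"
    using small[rule_format, OF pid_supported_in] local_admissible_le_1[OF q finite_\<gamma>, of pid] by simp
  show outside: "compose_flip f ((1 - u) / (1 - 2 * u)) (- u / (1 - 2 * u)) q x = 0"
    if "x \<notin> supported_in \<gamma>" for x
    by (rule compose_flip_outside[OF fV local_admissible_outside[OF q finite_\<gamma>] that])
  show "compose_flip f ((1 - u) / (1 - 2 * u)) (- u / (1 - 2 * u)) q x \<ge> 0" for x
    using compose_deflip_pos[OF u small, where x = x] outside[of x]
    by (cases "x \<in> supported_in \<gamma>") (simp_all add: less_imp_le)
  show "compose_flip f ((1 - u) / (1 - 2 * u)) (- u / (1 - 2 * u)) q e > 0" if "e \<in> errs \<gamma>" for e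
    using that compose_deflip_pos[OF u small] by (simp add: errs_def)
  show "compose_flip f ((1 - u) / (1 - 2 * u)) (- u / (1 - 2 * u)) q pid > 1/2"
    by (rule compose_deflip_pid[OF f u \<open>u \<le> 1/4\<close>])
  have "(1 - u) / c + - u / c = (1 - 2 * u) / c" for c
    using add_divide_distrib[of "1 - u" "- u" c, symmetric] by simp
  then show "(\<Sum>x\<in>supported_in \<gamma>. compose_flip f ((1 - u) / (1 - 2 * u)) (- u / (1 - 2 * u)) q x) = 1"
    using \<open>u \<le> 1/4\<close> by (simp add: sum_compose_flip[OF fV] local_admissible_sum[OF q finite_\<gamma>])
qed

end

lemma flip_deflip_factor_eq_1_iff:
  fixes u :: real
  assumes u: "0 < u" "u < 1/2" and s: "s \<in> {-1, 1}" "s' \<in> {-1, 1}"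
  shows "((1 - u) / (1 - 2 * u) + (- u / (1 - 2 * u)) * s') * ((1 - u) + u * s) = 1 \<longleftrightarrow> s = s'"
proof -
  obtain c where c: "u = (1 - c) / 2" "0 < c" "c < 1"
    using u by (intro that[of "1 - 2 * u"]) simp_all
  show ?thesis
    using s c(2,3) unfolding c(1) by (auto simp: field_simps)
qed

lemma compose_flip_neq:
  assumes q: "local_admissible \<gamma> q" and \<gamma>: "finite \<gamma>" and f: "f \<in> errs \<gamma>" and u: "0 < u"
  shows "compose_flip f (1 - u) u q \<noteq> q"
proof
  assume eq: "compose_flip f (1 - u) u q = q"
  have fV: "f \<in> supported_in \<gamma>" "f \<noteq> pid"
    using f by (simp_all add: errs_def)
  obtain B where B: "B \<in> supported_in \<gamma>" "anticomm f B"
    using exists_anticomm_supported_in[OF fV] by blast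
  have "pauli_transform \<gamma> q B = (1 - 2 * u) * pauli_transform \<gamma> q B"
    using B(2) pauli_transform_compose_flip[OF fV(1) finite_supp_if_supported_in[OF \<gamma> B(1)], of "1 - u" u q]
    by (simp add: eq comm_sign_def)
  then show False
    using u pauli_transform_local_admissible_pos[OF q \<gamma>, of B] by simp
qed

lemma exists_flip_deflip_rate:
  assumes q1: "local_admissible \<gamma>1 q1" "finite \<gamma>1" and q2: "local_admissible \<gamma>2 q2" "finite \<gamma>2"
  obtains u where "0 < u" "u < 1/2" "2 * u \<le> q1 pid - 1/2" "\<forall>x\<in>supported_in \<gamma>2. 4 * u \<le> q2 x"
proof -
  define m where "m = Min (q2 ` supported_in \<gamma>2)"
  have "finite (q2 ` supported_in \<gamma>2)" "q2 ` supported_in \<gamma>2 \<noteq> {}"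
    using finite_supported_in[OF q2(2)] pid_supported_in[of \<gamma>2] by blast+
  then have m: "0 < m" "\<forall>x\<in>supported_in \<gamma>2. m \<le> q2 x"
    using local_admissible_pos[OF q2] by (auto simp: m_def Min_gr_iff)
  define u where "u = min (m / 4) ((q1 pid - 1/2) / 2)"
  have u: "0 < u" "2 * u \<le> q1 pid - 1/2" "\<forall>x\<in>supported_in \<gamma>2. 4 * u \<le> q2 x"
    using m local_admissible_pid[OF q1] by (auto simp: u_def min_def field_simps)
  moreover have "u < 1/2"
    using u(2) local_admissible_le_1[OF q1, of pid] by simp
  ultimately show ?thesis
    using that by blast
qed

section \<open>Logarithms of Pauli eigenvalues\<close>

definition log_coeff :: "nat set \<Rightarrow> (npauli \<Rightarrow> real) \<Rightarrow> npauli \<Rightarrow> real" where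
  "log_coeff \<gamma> q = fourier_coeff \<gamma> (\<lambda>A. ln (pauli_transform \<gamma> q A))"

lemma ln_pauli_transform_expansion:
  "finite \<gamma> \<Longrightarrow> ln (pauli_transform \<gamma> q A) = (\<Sum>e\<in>supported_in \<gamma>. log_coeff \<gamma> q e * comm_sign e A)"
  unfolding log_coeff_def by (rule fourier_expansion) (simp_all add: pauli_transform_pauli_restrict)

lemma local_admissible_eqI_log_coeff:
  assumes q: "local_admissible \<gamma> q" and q': "local_admissible \<gamma> q'" and \<gamma>: "finite \<gamma>"
    and eq: "\<And>e. e \<in> errs \<gamma> \<Longrightarrow> log_coeff \<gamma> q e = log_coeff \<gamma> q' e"
  shows "q = q'"
proof -
  have "log_coeff \<gamma> q pid = - (\<Sum>e\<in>errs \<gamma>. log_coeff \<gamma> q e)" if "local_admissible \<gamma> q" for q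
    using ln_pauli_transform_expansion[OF \<gamma>, of q pid]
    by (simp add: pauli_transform_local_admissible_pid[OF that \<gamma>]
        sum_supported_in_eq_pid_plus_errs[OF that \<gamma>])
  then have "log_coeff \<gamma> q e = log_coeff \<gamma> q' e" if "e \<in> supported_in \<gamma>" for e
    using q q' eq that by (cases "e = pid") (simp_all add: errs_def)
  then have "ln (pauli_transform \<gamma> q A) = ln (pauli_transform \<gamma> q' A)" for A
    by (simp add: ln_pauli_transform_expansion[OF \<gamma>])
  then have "pauli_transform \<gamma> q A = pauli_transform \<gamma> q' A" for A
    by (simp add: pauli_transform_local_admissible_pos[OF q \<gamma>] pauli_transform_local_admissible_pos[OF q' \<gamma>])
  then show ?thesis
    by (intro pauli_transform_inj[OF \<gamma>]) (simp_all add: local_admissible_outside[OF q \<gamma>] local_admissible_outside[OF q' \<gamma>])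
qed

lemma ln_pauli_transform_sub_le:
  assumes q: "local_admissible \<gamma> q" and \<gamma>: "finite \<gamma>" and small: "(\<Sum>e\<in>errs \<gamma>. q e) \<le> 1/4"
  shows "\<bar>ln (pauli_transform \<gamma> q A) - (pauli_transform \<gamma> q A - 1)\<bar> \<le> 8 * (\<Sum>e\<in>errs \<gamma>. q e)\<^sup>2"
proof -
  define s where "s = (\<Sum>e\<in>errs \<gamma>. q e)"
  define y where "y = 1 - pauli_transform \<gamma> q A"
  have y: "0 \<le> y" "y \<le> 2 * s"
    using pauli_transform_local_admissible_le_1[OF q \<gamma>] pauli_transform_local_admissible_ge[OF q \<gamma>, of A]
      sum_errs_local_admissible[OF q \<gamma>] by (simp_all add: y_def s_def)
  then have "y \<le> 1/2"
    using small by (simp add: s_def)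
  then have "- y - 2 * y\<^sup>2 \<le> ln (1 - y)" "ln (1 - y) \<le> - y"
    using y ln_one_minus_pos_lower_bound[of y] ln_le_minus_one[of "1 - y"] by simp_all
  then have "\<bar>ln (1 - y) + y\<bar> \<le> 2 * y\<^sup>2"
    by (simp add: abs_le_iff)
  also have "\<dots> \<le> 2 * (2 * s)\<^sup>2"
    using y by (intro mult_left_mono power_mono) auto
  finally show ?thesis
    by (simp add: y_def s_def power_mult_distrib)
qed

(* ln \<lambda> = (\<lambda> - 1) + O(s\<^sup>2), and the projection of \<lambda> - 1 onto the syndrome
   class is exactly the class error rate. *)
lemma log_coeff_class_sum_approx:
  assumes \<M>: "pauli_subgroup n \<M>" and q: "local_admissible \<gamma> q" and \<gamma>: "finite \<gamma>"
    and e0: "finite (supp e0)" "syndrome \<M> e0 \<noteq> trivial_syndrome"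
    and small: "(\<Sum>e\<in>errs \<gamma>. q e) \<le> 1/4"
  shows "\<bar>\<Sum>e\<in>{e\<in>errs \<gamma>. syndrome \<M> e = syndrome \<M> e0}. log_coeff \<gamma> q e - q e\<bar>
         \<le> 8 * (\<Sum>e\<in>errs \<gamma>. q e)\<^sup>2"
proof -
  let ?N = "real (card \<M>)" and ?l = "pauli_transform \<gamma> q" and ?s = "\<Sum>e\<in>errs \<gamma>. q e"
  have N: "?N > 0"
    using card_pauli_subgroup_pos[OF \<M>] by simp
  have "?N * (\<Sum>e\<in>{e\<in>supported_in \<gamma>. syndrome \<M> e = syndrome \<M> e0}. log_coeff \<gamma> q e)
      = (\<Sum>m\<in>\<M>. comm_sign e0 m * ln (?l m))"
    unfolding log_coeff_def
    by (rule syndrome_projection[OF \<M> \<gamma> _ e0(1), symmetric]) (simp add: pauli_transform_pauli_restrict)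
  moreover have "?N * (\<Sum>e\<in>{e\<in>errs \<gamma>. syndrome \<M> e = syndrome \<M> e0}. q e)
      = (\<Sum>m\<in>\<M>. comm_sign e0 m * (?l m - 1))"
  proof -
    have "(\<Sum>m\<in>\<M>. comm_sign e0 m * ?l m)
        = ?N * (\<Sum>e\<in>{e\<in>supported_in \<gamma>. syndrome \<M> e = syndrome \<M> e0}. fourier_coeff \<gamma> ?l e)"
      by (rule syndrome_projection[OF \<M> \<gamma> _ e0(1)]) (rule pauli_transform_pauli_restrict)
    also have "\<dots> = ?N * (\<Sum>e\<in>{e\<in>errs \<gamma>. syndrome \<M> e = syndrome \<M> e0}. q e)"
      by (simp add: syndrome_class_in_supported_in[OF e0(2)] fourier_coeff_pauli_transform[OF \<gamma>] errs_def)
    finally show ?thesis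
      using sum_comm_sign_nontrivial[OF \<M> e0] by (simp add: right_diff_distrib sum_subtractf)
  qed
  ultimately have "?N * ((\<Sum>e\<in>{e\<in>supported_in \<gamma>. syndrome \<M> e = syndrome \<M> e0}. log_coeff \<gamma> q e)
            - (\<Sum>e\<in>{e\<in>errs \<gamma>. syndrome \<M> e = syndrome \<M> e0}. q e))
      = (\<Sum>m\<in>\<M>. comm_sign e0 m * (ln (?l m) - (?l m - 1)))"
    by (simp add: right_diff_distrib sum_subtractf)
  also have "\<bar>\<dots>\<bar> \<le> (\<Sum>m\<in>\<M>. 8 * ?s\<^sup>2)"
    by (rule order_trans[OF sum_abs sum_mono])
      (simp add: abs_mult ln_pauli_transform_sub_le[OF q \<gamma> small])
  also have "\<dots> = ?N * (8 * ?s\<^sup>2)"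
    by simp
  finally show ?thesis
    using N by (simp add: abs_mult syndrome_class_in_supported_in[OF e0(2)] sum_subtractf)
qed

lemma log_coeff_class_sum_approx_norm:
  assumes \<M>: "pauli_subgroup n \<M>" and q: "local_admissible \<gamma> q" and \<gamma>: "finite \<gamma>"
    and e0: "finite (supp e0)" "syndrome \<M> e0 \<noteq> trivial_syndrome"
    and c: "real (card (errs \<gamma>)) \<le> c" and small: "c * (\<Sum>e\<in>errs \<gamma>. (q e)\<^sup>2) \<le> 1/16"
  shows "\<bar>\<Sum>e\<in>{e\<in>errs \<gamma>. syndrome \<M> e = syndrome \<M> e0}. log_coeff \<gamma> q e - q e\<bar>
         \<le> 8 * c * (\<Sum>e\<in>errs \<gamma>. (q e)\<^sup>2)"
proof -
  let ?S = "\<Sum>e\<in>errs \<gamma>. (q e)\<^sup>2" and ?s = "\<Sum>e\<in>errs \<gamma>. q e"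
  have "?s\<^sup>2 \<le> ?S * real (card (errs \<gamma>))"
    by (rule sum_squared_le_sum_of_squares)
  also have "\<dots> \<le> ?S * c"
    using c by (intro mult_left_mono) (simp_all add: sum_nonneg)
  finally have s_sq: "?s\<^sup>2 \<le> c * ?S"
    by (simp add: mult.commute)
  then have "?s\<^sup>2 \<le> (1/4)\<^sup>2"
    using small by (simp add: power2_eq_square)
  then have "?s \<le> 1/4"
    by (rule power2_le_imp_le) simp
  then have "\<bar>\<Sum>e\<in>{e\<in>errs \<gamma>. syndrome \<M> e = syndrome \<M> e0}. log_coeff \<gamma> q e - q e\<bar> \<le> 8 * ?s\<^sup>2"
    by (rule log_coeff_class_sum_approx[OF \<M> q \<gamma> e0])
  also have "\<dots> \<le> 8 * c * ?S"
    using s_sq by simp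
  finally show ?thesis .
qed

lemma pprod_empty [simp]: "pprod f {} = pid"
  by (simp add: pprod_def pid_def one_pauli_def)

lemma pprod_insert: "finite G \<Longrightarrow> g \<notin> G \<Longrightarrow> pprod f (insert g G) = pmult (f g) (pprod f G)"
  by (simp add: pprod_def pmult_def)

lemma pprod_supported_in:
  "finite G \<Longrightarrow> (\<And>g. g \<in> G \<Longrightarrow> f g \<in> supported_in S) \<Longrightarrow> pprod f G \<in> supported_in S"
  by (induction G rule: finite_induct) (auto simp: pprod_insert intro: pmult_supported_in)

lemma comm_sign_pprod:
  "finite G \<Longrightarrow> finite (supp C) \<Longrightarrow> comm_sign (pprod f G) C = (\<Prod>g\<in>G. comm_sign (f g) C)"
  by (induction G rule: finite_induct) (auto simp: pprod_insert comm_sign_pmult_left)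

lemma synd_exp_eq_pauli_transform: "synd_exp n \<Gamma> P A = pauli_transform {..<n} (total_dist \<Gamma> P) A"
  by (simp add: synd_exp_def pauli_transform_def paulis_eq_supported_in)

lemma total_dist_neq_if_synd_exp_neq:
  "synd_exp n \<Gamma> P' A \<noteq> synd_exp n \<Gamma> P A \<Longrightarrow> total_dist \<Gamma> P' \<noteq> total_dist \<Gamma> P"
  by (auto simp: synd_exp_def)

locale syndrome_setup =
  fixes n :: nat and \<Gamma> :: "nat set set" and \<M> :: "npauli set"
  assumes finite_\<Gamma>: "finite \<Gamma>"
    and supports_bounded: "\<forall>\<gamma>\<in>\<Gamma>. \<gamma> \<subseteq> {..<n}"
    and measured_subgroup: "pauli_subgroup n \<M>"
begin

lemma finite_support: "\<gamma> \<in> \<Gamma> \<Longrightarrow> finite \<gamma>"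
  using supports_bounded finite_subset[of _ "{..<n}"] by blast

lemma supported_in_subset_paulis: "\<gamma> \<in> \<Gamma> \<Longrightarrow> supported_in \<gamma> \<subseteq> paulis n"
  using supports_bounded by (simp add: paulis_eq_supported_in supported_in_mono)

lemma finite_supp_if_paulis: "A \<in> paulis n \<Longrightarrow> finite (supp A)"
  by (auto simp: paulis_eq_supported_in intro: finite_supp_if_supported_in)

lemma admissibleD: "admissible \<Gamma> P \<Longrightarrow> \<gamma> \<in> \<Gamma> \<Longrightarrow> local_admissible \<gamma> (P \<gamma>)"
  by (simp add: admissible_iff_local_admissible)

lemma exists_admissible: "\<exists>P. admissible \<Gamma> P"
proof -
  have "local_admissible \<gamma> (SOME q. local_admissible \<gamma> q)" if "\<gamma> \<in> \<Gamma>" for \<gamma>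
    using exists_local_admissible[OF finite_support[OF that]] by (rule someI_ex)
  then show ?thesis
    unfolding admissible_iff_local_admissible by (intro exI[of _ "\<lambda>\<gamma>. SOME q. local_admissible \<gamma> q"]) simp
qed

lemma total_dist_outside: "e \<notin> paulis n \<Longrightarrow> total_dist \<Gamma> P e = 0"
  unfolding total_dist_def
  using supported_in_subset_paulis
  by (intro sum.neutral ballI) (auto simp: paulis_eq_supported_in intro!: pprod_supported_in[OF finite_\<Gamma>])

(* Convolution theorem: composing Pauli channels multiplies their eigenvalues. *)
lemma synd_exp_eq_prod:
  assumes A: "finite (supp A)"
  shows "synd_exp n \<Gamma> P A = (\<Prod>\<gamma>\<in>\<Gamma>. pauli_transform \<gamma> (P \<gamma>) A)"
proof -
  let ?F = "\<Pi>\<^sub>E \<gamma>\<in>\<Gamma>. supported_in \<gamma>" and ?w = "\<lambda>f. \<Prod>\<gamma>\<in>\<Gamma>. P \<gamma> (f \<gamma>)"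
  have F: "finite ?F"
    using finite_\<Gamma> by (intro finite_PiE) (auto intro: finite_supported_in finite_support)
  have in_paulis: "pprod f \<Gamma> \<in> paulis n" if "f \<in> ?F" for f
    using that supported_in_subset_paulis
    by (auto simp: paulis_eq_supported_in intro!: pprod_supported_in[OF finite_\<Gamma>])
  have "synd_exp n \<Gamma> P A
     = (\<Sum>e\<in>paulis n. \<Sum>f\<in>?F. if pprod f \<Gamma> = e then ?w f * comm_sign e A else 0)"
    unfolding synd_exp_def total_dist_def sum_distrib_right by (intro sum.cong) auto
  also have "\<dots> = (\<Sum>f\<in>?F. \<Sum>e\<in>paulis n. if pprod f \<Gamma> = e then ?w f * comm_sign e A else 0)"
    by (rule sum.swap)
  also have "\<dots> = (\<Sum>f\<in>?F. \<Prod>\<gamma>\<in>\<Gamma>. P \<gamma> (f \<gamma>) * comm_sign (f \<gamma>) A)"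
    using finite_supported_in[of "{..<n}"]
    by (intro sum.cong) (simp_all add: in_paulis paulis_eq_supported_in[symmetric]
        comm_sign_pprod[OF finite_\<Gamma> A] prod.distrib)
  also have "\<dots> = (\<Prod>\<gamma>\<in>\<Gamma>. pauli_transform \<gamma> (P \<gamma>) A)"
    unfolding pauli_transform_def
    by (rule prod_sum_PiE[symmetric]) (auto intro: finite_\<Gamma> finite_supported_in finite_support)
  finally show ?thesis .
qed

lemma total_dist_eqI:
  assumes "\<And>A. A \<in> paulis n \<Longrightarrow> synd_exp n \<Gamma> P A = synd_exp n \<Gamma> P' A"
  shows "total_dist \<Gamma> P = total_dist \<Gamma> P'"
  using assms total_dist_outside
  by (intro pauli_transform_inj[of "{..<n}"])
    (simp_all add: synd_exp_eq_pauli_transform paulis_eq_supported_in)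

lemma synd_exp_pos: "admissible \<Gamma> P \<Longrightarrow> finite (supp A) \<Longrightarrow> synd_exp n \<Gamma> P A > 0"
  by (simp add: synd_exp_eq_prod prod_pos admissibleD pauli_transform_local_admissible_pos finite_support)

lemma synd_exp_compose_flip:
  assumes \<gamma>: "\<gamma> \<in> \<Gamma>" and f: "f \<in> supported_in \<gamma>" and A: "finite (supp A)"
  shows "synd_exp n \<Gamma> (P(\<gamma> := compose_flip f a b (P \<gamma>))) A = (a + b * comm_sign f A) * synd_exp n \<Gamma> P A"
proof -
  have "(\<Prod>\<gamma>'\<in>\<Gamma> - {\<gamma>}. pauli_transform \<gamma>' ((P(\<gamma> := compose_flip f a b (P \<gamma>))) \<gamma>') A)
      = (\<Prod>\<gamma>'\<in>\<Gamma> - {\<gamma>}. pauli_transform \<gamma>' (P \<gamma>') A)"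
    by (rule prod.cong) auto
  then show ?thesis
    by (simp add: synd_exp_eq_prod[OF A] prod.remove[OF finite_\<Gamma> \<gamma>] pauli_transform_compose_flip[OF f A])
qed

lemma ln_synd_exp:
  assumes P: "admissible \<Gamma> P" and A: "finite (supp A)"
  shows "ln (synd_exp n \<Gamma> P A) = (\<Sum>\<gamma>\<in>\<Gamma>. ln (pauli_transform \<gamma> (P \<gamma>) A))"
  unfolding synd_exp_eq_prod[OF A]
  by (rule ln_prod[OF finite_\<Gamma>])
    (metis pauli_transform_local_admissible_pos[OF admissibleD[OF P] finite_support] less_irrefl)

definition indistinguishable :: "(nat set \<Rightarrow> npauli \<Rightarrow> real) \<Rightarrow> (nat set \<Rightarrow> npauli \<Rightarrow> real) \<Rightarrow> bool" where
  "indistinguishable P P' \<longleftrightarrow>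
     admissible \<Gamma> P \<and> admissible \<Gamma> P' \<and> (\<forall>m\<in>\<M>. synd_exp n \<Gamma> P m = synd_exp n \<Gamma> P' m)"

lemma learnable_iff: "learnable n \<Gamma> \<M> Q \<longleftrightarrow> (\<forall>P P'. indistinguishable P P' \<longrightarrow> Q P = Q P')"
  by (auto simp: learnable_def indistinguishable_def)

definition syndrome_estimate :: "npauli \<Rightarrow> (nat set \<Rightarrow> npauli \<Rightarrow> real) \<Rightarrow> real" where
  "syndrome_estimate e0 P = (\<Sum>m\<in>\<M>. comm_sign e0 m * ln (synd_exp n \<Gamma> P m)) / real (card \<M>)"

lemma learnable_syndrome_estimate: "learnable n \<Gamma> \<M> (syndrome_estimate e0)"
  by (auto simp: learnable_iff indistinguishable_def syndrome_estimate_def intro!: sum.cong)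

lemma syndrome_estimate_eq_log_coeffs:
  assumes P: "admissible \<Gamma> P" and e0: "finite (supp e0)"
  shows "syndrome_estimate e0 P
    = (\<Sum>\<gamma>\<in>\<Gamma>. \<Sum>e\<in>{e\<in>supported_in \<gamma>. syndrome \<M> e = syndrome \<M> e0}. log_coeff \<gamma> (P \<gamma>) e)"
proof -
  have "comm_sign e0 m * ln (synd_exp n \<Gamma> P m) = (\<Sum>\<gamma>\<in>\<Gamma>. comm_sign e0 m * ln (pauli_transform \<gamma> (P \<gamma>) m))"
    if "m \<in> \<M>" for m
    using finite_supp_if_pauli_subgroup[OF measured_subgroup that]
    by (simp add: ln_synd_exp[OF P] sum_distrib_left)
  then have "(\<Sum>m\<in>\<M>. comm_sign e0 m * ln (synd_exp n \<Gamma> P m))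
      = (\<Sum>m\<in>\<M>. \<Sum>\<gamma>\<in>\<Gamma>. comm_sign e0 m * ln (pauli_transform \<gamma> (P \<gamma>) m))"
    by (rule sum.cong[OF refl])
  also have "\<dots> = (\<Sum>\<gamma>\<in>\<Gamma>. \<Sum>m\<in>\<M>. comm_sign e0 m * ln (pauli_transform \<gamma> (P \<gamma>) m))"
    by (rule sum.swap)
  also have "\<dots> = (\<Sum>\<gamma>\<in>\<Gamma>. real (card \<M>)
      * (\<Sum>e\<in>{e\<in>supported_in \<gamma>. syndrome \<M> e = syndrome \<M> e0}. log_coeff \<gamma> (P \<gamma>) e))"
    unfolding log_coeff_def
    by (intro sum.cong refl syndrome_projection[OF measured_subgroup finite_support _ e0])
      (simp_all add: pauli_transform_pauli_restrict)
  finally show ?thesis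
    using card_pauli_subgroup_pos[OF measured_subgroup]
    by (simp add: syndrome_estimate_def flip: sum_distrib_left)
qed

section \<open>Learnability\<close>

lemma channel_eq_if_unique_syndromes:
  assumes PP': "indistinguishable P P'" and \<gamma>0: "\<gamma>0 \<in> \<Gamma>"
    and unique: "\<forall>e\<in>errs \<gamma>0. syndrome \<M> e \<noteq> trivial_syndrome \<and>
           (\<forall>(\<gamma>', e')\<in>errs_disj \<Gamma>. (\<gamma>', e') \<noteq> (\<gamma>0, e) \<longrightarrow> syndrome \<M> e' \<noteq> syndrome \<M> e)"
  shows "P \<gamma>0 = P' \<gamma>0"
proof (rule local_admissible_eqI_log_coeff[OF _ _ finite_support[OF \<gamma>0]])
  show "local_admissible \<gamma>0 (P \<gamma>0)" "local_admissible \<gamma>0 (P' \<gamma>0)"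
    using PP' \<gamma>0 by (simp_all add: indistinguishable_def admissibleD)
  fix e0 assume e0: "e0 \<in> errs \<gamma>0"
  have nontrivial: "syndrome \<M> e0 \<noteq> trivial_syndrome"
    using bspec[OF unique e0] by (rule conjunct1)
  have distinct: "\<forall>(\<gamma>', e')\<in>errs_disj \<Gamma>. (\<gamma>', e') \<noteq> (\<gamma>0, e0) \<longrightarrow> syndrome \<M> e' \<noteq> syndrome \<M> e0"
    using bspec[OF unique e0] by (rule conjunct2)
  note class_eq = syndrome_class_eq_if_unique_in_disj[OF _ e0 nontrivial distinct]
  have estimate: "syndrome_estimate e0 Q = log_coeff \<gamma>0 (Q \<gamma>0) e0" if "admissible \<Gamma> Q" for Q
  proof -
    have e0_fin: "finite (supp e0)"
      using e0 finite_support[OF \<gamma>0] by (auto simp: errs_def intro: finite_supp_if_supported_in)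
    have "syndrome_estimate e0 Q = (\<Sum>\<gamma>\<in>\<Gamma>. if \<gamma> = \<gamma>0 then log_coeff \<gamma>0 (Q \<gamma>0) e0 else 0)"
      unfolding syndrome_estimate_eq_log_coeffs[OF that e0_fin] by (rule sum.cong[OF refl]) (simp add: class_eq)
    then show ?thesis
      using \<gamma>0 by (simp add: finite_\<Gamma>)
  qed
  have "syndrome_estimate e0 P = syndrome_estimate e0 P'"
    using learnable_syndrome_estimate PP' by (simp add: learnable_iff)
  then show "log_coeff \<gamma>0 (P \<gamma>0) e0 = log_coeff \<gamma>0 (P' \<gamma>0) e0"
    using PP' by (simp add: estimate indistinguishable_def)
qed

lemma errors_subset_paulis: "insert pid (errs_union \<Gamma>) \<subseteq> paulis n"
  using supported_in_subset_paulis by (auto simp: errs_union_def errs_def paulis_eq_supported_in)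

lemma ln_synd_exp_eq_sum_errors:
  assumes P: "admissible \<Gamma> P" and A: "finite (supp A)"
  shows "ln (synd_exp n \<Gamma> P A) = (\<Sum>e\<in>insert pid (errs_union \<Gamma>).
           comm_sign e A * (\<Sum>\<gamma>\<in>\<Gamma>. if e \<in> supported_in \<gamma> then log_coeff \<gamma> (P \<gamma>) e else 0))"
proof -
  let ?W = "insert pid (errs_union \<Gamma>)"
  have W: "finite ?W"
    using errors_subset_paulis finite_supported_in[of "{..<n}"]
    by (auto simp: paulis_eq_supported_in intro: finite_subset)
  have "ln (synd_exp n \<Gamma> P A) = (\<Sum>\<gamma>\<in>\<Gamma>. \<Sum>e\<in>supported_in \<gamma>. log_coeff \<gamma> (P \<gamma>) e * comm_sign e A)"
    unfolding ln_synd_exp[OF P A] by (intro sum.cong refl ln_pauli_transform_expansion finite_support)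
  also have "\<dots> = (\<Sum>\<gamma>\<in>\<Gamma>. \<Sum>e\<in>?W. if e \<in> supported_in \<gamma> then log_coeff \<gamma> (P \<gamma>) e * comm_sign e A else 0)"
  proof (rule sum.cong[OF refl])
    fix \<gamma> assume "\<gamma> \<in> \<Gamma>"
    then have "?W \<inter> supported_in \<gamma> = supported_in \<gamma>"
      by (auto simp: errs_union_def errs_def)
    then show "(\<Sum>e\<in>supported_in \<gamma>. log_coeff \<gamma> (P \<gamma>) e * comm_sign e A)
        = (\<Sum>e\<in>?W. if e \<in> supported_in \<gamma> then log_coeff \<gamma> (P \<gamma>) e * comm_sign e A else 0)"
      by (simp only: sum.inter_restrict[OF W, symmetric])
  qed
  also have "\<dots> = (\<Sum>e\<in>?W. \<Sum>\<gamma>\<in>\<Gamma>. if e \<in> supported_in \<gamma> then log_coeff \<gamma> (P \<gamma>) e * comm_sign e A else 0)"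
    by (rule sum.swap)
  also have "\<dots> = (\<Sum>e\<in>?W. comm_sign e A * (\<Sum>\<gamma>\<in>\<Gamma>. if e \<in> supported_in \<gamma> then log_coeff \<gamma> (P \<gamma>) e else 0))"
    unfolding sum_distrib_left by (intro sum.cong refl) simp
  finally show ?thesis .
qed

lemma total_dist_eq_if_unique_syndromes:
  assumes PP': "indistinguishable P P'"
    and unique: "\<forall>e\<in>errs_union \<Gamma>. syndrome \<M> e \<noteq> trivial_syndrome \<and>
           (\<forall>e'\<in>errs_union \<Gamma>. e' \<noteq> e \<longrightarrow> syndrome \<M> e' \<noteq> syndrome \<M> e)"
  shows "total_dist \<Gamma> P = total_dist \<Gamma> P'"
proof (rule total_dist_eqI)
  let ?W = "insert pid (errs_union \<Gamma>)"
  let ?c = "\<lambda>Q e. \<Sum>\<gamma>\<in>\<Gamma>. if e \<in> supported_in \<gamma> then log_coeff \<gamma> (Q \<gamma>) e else 0"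
  have P: "admissible \<Gamma> P" "admissible \<Gamma> P'"
    using PP' by (simp_all add: indistinguishable_def)
  note class_eq = syndrome_class_eq_if_unique_in_union[OF unique]
  have estimate: "syndrome_estimate e0 Q = ?c Q e0" if "admissible \<Gamma> Q" "e0 \<in> ?W" for Q e0
  proof -
    have e0_fin: "finite (supp e0)"
      using that(2) errors_subset_paulis finite_supp_if_paulis by blast
    show ?thesis
      unfolding syndrome_estimate_eq_log_coeffs[OF that(1) e0_fin] using that(2)
      by (intro sum.cong[OF refl]) (simp add: class_eq[OF that(2)])
  qed
  have c: "?c P e = ?c P' e" if "e \<in> ?W" for e
  proof -
    have "syndrome_estimate e P = syndrome_estimate e P'"
      using learnable_syndrome_estimate PP' by (simp add: learnable_iff)
    then show ?thesis
      using that P by (simp add: estimate)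
  qed
  fix A assume "A \<in> paulis n"
  then have A: "finite (supp A)"
    by (rule finite_supp_if_paulis)
  have "ln (synd_exp n \<Gamma> P A) = ln (synd_exp n \<Gamma> P' A)"
    unfolding ln_synd_exp_eq_sum_errors[OF P(1) A] ln_synd_exp_eq_sum_errors[OF P(2) A]
    by (intro sum.cong refl) (simp add: c)
  then show "synd_exp n \<Gamma> P A = synd_exp n \<Gamma> P' A"
    using synd_exp_pos[OF P(1) A] synd_exp_pos[OF P(2) A] by simp
qed

lemma exists_indistinguishable_flip:
  assumes P: "admissible \<Gamma> P" and \<gamma>: "\<gamma> \<in> \<Gamma>" and f: "f \<in> errs \<gamma>"
    and trivial: "syndrome \<M> f = trivial_syndrome"
  obtains P' where "indistinguishable P P'" "total_dist \<Gamma> P' \<noteq> total_dist \<Gamma> P" "P' \<gamma> \<noteq> P \<gamma>"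
proof -
  have fV: "f \<in> supported_in \<gamma>" "f \<noteq> pid"
    using f by (auto simp: errs_def)
  define u where "u = (P \<gamma> pid - 1/2) / 2"
  have u: "0 < u" "2 * u \<le> P \<gamma> pid - 1/2"
    using local_admissible_pid[OF admissibleD[OF P \<gamma>] finite_support[OF \<gamma>]] by (simp_all add: u_def)
  define P' where "P' = P(\<gamma> := compose_flip f (1 - u) u (P \<gamma>))"
  have "admissible \<Gamma> P'"
    unfolding P'_def using u
    by (intro admissible_fun_upd[OF P] local_admissible_flip[OF admissibleD[OF P \<gamma>] finite_support[OF \<gamma>] fV(1)]) simp_all
  moreover have "synd_exp n \<Gamma> P' m = synd_exp n \<Gamma> P m" if "m \<in> \<M>" for m
    using trivial that
    by (simp add: P'_def synd_exp_compose_flip[OF \<gamma> fV(1) finite_supp_if_pauli_subgroup[OF measured_subgroup that]]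
        syndrome_eq_trivial_iff comm_sign_def)
  moreover obtain B where B: "B \<in> supported_in \<gamma>" "anticomm f B"
    using exists_anticomm_supported_in[OF fV] by blast
  have "total_dist \<Gamma> P' \<noteq> total_dist \<Gamma> P"
  proof (rule total_dist_neq_if_synd_exp_neq)
    have finB: "finite (supp B)"
      using B(1) finite_support[OF \<gamma>] by (rule finite_supp_if_supported_in[rotated])
    show "synd_exp n \<Gamma> P' B \<noteq> synd_exp n \<Gamma> P B"
      using B(2) u(1) synd_exp_pos[OF P finB]
      by (simp add: P'_def synd_exp_compose_flip[OF \<gamma> fV(1) finB] comm_sign_def)
  qed
  moreover from this have "P' \<gamma> \<noteq> P \<gamma>"
    by (auto simp: P'_def)
  ultimately show ?thesis
    using P by (intro that) (simp_all add: indistinguishable_def)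
qed

lemma synd_exp_compose_flip2:
  assumes \<gamma>: "\<gamma>1 \<in> \<Gamma>" "\<gamma>2 \<in> \<Gamma>" "\<gamma>1 \<noteq> \<gamma>2"
    and f: "f1 \<in> supported_in \<gamma>1" "f2 \<in> supported_in \<gamma>2" and A: "finite (supp A)"
  shows "synd_exp n \<Gamma> (P(\<gamma>1 := compose_flip f1 a1 b1 (P \<gamma>1), \<gamma>2 := compose_flip f2 a2 b2 (P \<gamma>2))) A
    = (a2 + b2 * comm_sign f2 A) * ((a1 + b1 * comm_sign f1 A) * synd_exp n \<Gamma> P A)"
proof -
  let ?P1 = "P(\<gamma>1 := compose_flip f1 a1 b1 (P \<gamma>1))"
  have "P(\<gamma>1 := compose_flip f1 a1 b1 (P \<gamma>1), \<gamma>2 := compose_flip f2 a2 b2 (P \<gamma>2))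
      = ?P1(\<gamma>2 := compose_flip f2 a2 b2 (?P1 \<gamma>2))"
    using \<gamma>(3) by simp
  then show ?thesis
    by (simp only: synd_exp_compose_flip[OF \<gamma>(2) f(2) A] synd_exp_compose_flip[OF \<gamma>(1) f(1) A])
qed

(* Compose the channel at \<gamma>1 with a flip by e1 and the channel at \<gamma>2 with the
   inverse of a flip by e2: the two eigenvalue factors cancel wherever e1 and e2
   have the same commutation sign, in particular on \<M>. *)
lemma exists_indistinguishable_flip_deflip:
  assumes P: "admissible \<Gamma> P" and \<gamma>: "\<gamma>1 \<in> \<Gamma>" "\<gamma>2 \<in> \<Gamma>" "\<gamma>1 \<noteq> \<gamma>2"
    and e: "e1 \<in> errs \<gamma>1" "e2 \<in> errs \<gamma>2" and syn: "syndrome \<M> e1 = syndrome \<M> e2"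
  obtains P' where "indistinguishable P P'" "P' \<gamma>1 \<noteq> P \<gamma>1"
    "e1 \<noteq> e2 \<longrightarrow> total_dist \<Gamma> P' \<noteq> total_dist \<Gamma> P"
proof -
  have eV: "e1 \<in> supported_in \<gamma>1" "e2 \<in> supported_in \<gamma>2"
    using e by (simp_all add: errs_def)
  note q1 = admissibleD[OF P \<gamma>(1)] finite_support[OF \<gamma>(1)]
  note q2 = admissibleD[OF P \<gamma>(2)] finite_support[OF \<gamma>(2)]
  obtain u where u: "0 < u" "u < 1/2" "2 * u \<le> P \<gamma>1 pid - 1/2" "\<forall>x\<in>supported_in \<gamma>2. 4 * u \<le> P \<gamma>2 x"
    using exists_flip_deflip_rate[OF q1 q2] by blast
  define P' where "P' = P(\<gamma>1 := compose_flip e1 (1 - u) u (P \<gamma>1),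
    \<gamma>2 := compose_flip e2 ((1 - u) / (1 - 2 * u)) (- u / (1 - 2 * u)) (P \<gamma>2))"
  have "admissible \<Gamma> P'"
    unfolding P'_def using u
    by (intro admissible_fun_upd[OF admissible_fun_upd[OF P]] local_admissible_flip[OF q1 eV(1)]
        local_admissible_deflip[OF q2 e(2)]) simp_all
  have synd: "synd_exp n \<Gamma> P' A = ((1 - u) / (1 - 2 * u) + (- u / (1 - 2 * u)) * comm_sign e2 A)
      * ((1 - u) + u * comm_sign e1 A) * synd_exp n \<Gamma> P A" if "finite (supp A)" for A
    unfolding P'_def synd_exp_compose_flip2[OF \<gamma> eV that] by (rule mult.assoc[symmetric])
  have factor: "((1 - u) / (1 - 2 * u) + (- u / (1 - 2 * u)) * comm_sign e2 A)
      * ((1 - u) + u * comm_sign e1 A) = 1 \<longleftrightarrow> comm_sign e1 A = comm_sign e2 A" for A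
    by (rule flip_deflip_factor_eq_1_iff[OF u(1,2) comm_sign_cases comm_sign_cases])
  have "synd_exp n \<Gamma> P' m = synd_exp n \<Gamma> P m" if "m \<in> \<M>" for m
    unfolding synd[OF finite_supp_if_pauli_subgroup[OF measured_subgroup that]]
      factor[THEN iffD2, OF comm_sign_eq_if_syndrome_eq[OF syn that]] by simp
  with P \<open>admissible \<Gamma> P'\<close> have "indistinguishable P P'"
    by (simp add: indistinguishable_def)
  moreover have "P' \<gamma>1 \<noteq> P \<gamma>1"
    using compose_flip_neq[OF q1 e(1) u(1)] \<gamma>(3) by (simp add: P'_def)
  moreover have "e1 \<noteq> e2 \<longrightarrow> total_dist \<Gamma> P' \<noteq> total_dist \<Gamma> P"
  proof
    assume "e1 \<noteq> e2"
    moreover have "e1 \<in> supported_in {..<n}" "e2 \<in> supported_in {..<n}"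
      using eV supported_in_subset_paulis \<gamma> by (auto simp: paulis_eq_supported_in)
    ultimately obtain B where B: "B \<in> supported_in {..<n}" "anticomm e1 B \<noteq> anticomm e2 B"
      using supported_in_separating[of "{..<n}"] by blast
    note finB = finite_supp_if_supported_in[OF finite_lessThan B(1)]
    show "total_dist \<Gamma> P' \<noteq> total_dist \<Gamma> P"
      using B(2) factor[of B] synd_exp_pos[OF P finB]
      by (intro total_dist_neq_if_synd_exp_neq[where n = n and A = B]) (simp add: synd[OF finB] comm_sign_def)
  qed
  ultimately show ?thesis
    by (rule that)
qed

lemma exists_indistinguishable_if_syndrome_eq:
  assumes P: "admissible \<Gamma> P" and \<gamma>: "\<gamma>1 \<in> \<Gamma>" "\<gamma>2 \<in> \<Gamma>"
    and e: "e1 \<in> errs \<gamma>1" "e2 \<in> errs \<gamma>2" "(\<gamma>1, e1) \<noteq> (\<gamma>2, e2)"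
    and syn: "syndrome \<M> e1 = syndrome \<M> e2"
  obtains P' where "indistinguishable P P'" "P' \<gamma>1 \<noteq> P \<gamma>1"
    "e1 \<noteq> e2 \<longrightarrow> total_dist \<Gamma> P' \<noteq> total_dist \<Gamma> P"
proof (cases "\<gamma>1 = \<gamma>2")
  case True
  then have "pmult e1 e2 \<in> errs \<gamma>1"
    using e by (auto simp: errs_def pmult_supported_in pmult_eq_pid_iff)
  moreover have "syndrome \<M> (pmult e1 e2) = trivial_syndrome"
    by (rule syndrome_pmult_eq_trivial[OF measured_subgroup syn])
  ultimately obtain P' where "indistinguishable P P'" "total_dist \<Gamma> P' \<noteq> total_dist \<Gamma> P" "P' \<gamma>1 \<noteq> P \<gamma>1"
    by (rule exists_indistinguishable_flip[OF P \<gamma>(1)])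
  then show ?thesis
    using that by blast
next
  case False
  obtain P' where "indistinguishable P P'" "P' \<gamma>1 \<noteq> P \<gamma>1" "e1 \<noteq> e2 \<longrightarrow> total_dist \<Gamma> P' \<noteq> total_dist \<Gamma> P"
    by (rule exists_indistinguishable_flip_deflip[OF P \<gamma> False e(1,2) syn])
  then show ?thesis
    by (rule that)
qed

lemma learnable_total_dist_iff:
  "learnable n \<Gamma> \<M> (total_dist \<Gamma>) \<longleftrightarrow>
     (\<forall>e\<in>errs_union \<Gamma>. syndrome \<M> e \<noteq> trivial_syndrome \<and>
        (\<forall>e'\<in>errs_union \<Gamma>. e' \<noteq> e \<longrightarrow> syndrome \<M> e' \<noteq> syndrome \<M> e))"
proof
  assume learnable: "learnable n \<Gamma> \<M> (total_dist \<Gamma>)"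
  obtain P where P: "admissible \<Gamma> P"
    using exists_admissible by blast
  have no_witness: "total_dist \<Gamma> P' = total_dist \<Gamma> P" if "indistinguishable P P'" for P'
    using learnable that by (simp add: learnable_iff)
  show "\<forall>e\<in>errs_union \<Gamma>. syndrome \<M> e \<noteq> trivial_syndrome \<and>
        (\<forall>e'\<in>errs_union \<Gamma>. e' \<noteq> e \<longrightarrow> syndrome \<M> e' \<noteq> syndrome \<M> e)"
  proof (intro ballI conjI impI notI)
    fix e assume "e \<in> errs_union \<Gamma>"
    then obtain \<gamma> where \<gamma>: "\<gamma> \<in> \<Gamma>" "e \<in> errs \<gamma>"
      by (auto simp: errs_union_def)
    show False if "syndrome \<M> e = trivial_syndrome"
      using exists_indistinguishable_flip[OF P \<gamma> that] no_witness by metis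
    fix e' assume "e' \<in> errs_union \<Gamma>" "e' \<noteq> e" "syndrome \<M> e' = syndrome \<M> e"
    moreover obtain \<gamma>' where "\<gamma>' \<in> \<Gamma>" "e' \<in> errs \<gamma>'"
      using \<open>e' \<in> errs_union \<Gamma>\<close> by (auto simp: errs_union_def)
    ultimately show False
      using exists_indistinguishable_if_syndrome_eq[OF P \<gamma>(1) \<open>\<gamma>' \<in> \<Gamma>\<close> \<gamma>(2) \<open>e' \<in> errs \<gamma>'\<close>]
        no_witness by (metis prod.inject)
  qed
next
  assume "\<forall>e\<in>errs_union \<Gamma>. syndrome \<M> e \<noteq> trivial_syndrome \<and>
        (\<forall>e'\<in>errs_union \<Gamma>. e' \<noteq> e \<longrightarrow> syndrome \<M> e' \<noteq> syndrome \<M> e)"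
  then show "learnable n \<Gamma> \<M> (total_dist \<Gamma>)"
    by (simp add: learnable_iff total_dist_eq_if_unique_syndromes)
qed

lemma learnable_channel_iff:
  assumes \<gamma>0: "\<gamma>0 \<in> \<Gamma>"
  shows "learnable n \<Gamma> \<M> (\<lambda>P. P \<gamma>0) \<longleftrightarrow>
     (\<forall>e\<in>errs \<gamma>0. syndrome \<M> e \<noteq> trivial_syndrome \<and>
        (\<forall>(\<gamma>', e')\<in>errs_disj \<Gamma>. (\<gamma>', e') \<noteq> (\<gamma>0, e) \<longrightarrow> syndrome \<M> e' \<noteq> syndrome \<M> e))"
proof
  assume learnable: "learnable n \<Gamma> \<M> (\<lambda>P. P \<gamma>0)"
  obtain P where P: "admissible \<Gamma> P"
    using exists_admissible by blast
  have no_witness: "P' \<gamma>0 = P \<gamma>0" if "indistinguishable P P'" for P'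
    using learnable that by (simp add: learnable_iff)
  show "\<forall>e\<in>errs \<gamma>0. syndrome \<M> e \<noteq> trivial_syndrome \<and>
        (\<forall>(\<gamma>', e')\<in>errs_disj \<Gamma>. (\<gamma>', e') \<noteq> (\<gamma>0, e) \<longrightarrow> syndrome \<M> e' \<noteq> syndrome \<M> e)"
  proof (intro ballI conjI impI notI)
    fix e assume e: "e \<in> errs \<gamma>0"
    show False if "syndrome \<M> e = trivial_syndrome"
      using exists_indistinguishable_flip[OF P \<gamma>0 e that] no_witness by metis
    fix x assume "x \<in> errs_disj \<Gamma>"
    then obtain \<gamma>' e' where x: "x = (\<gamma>', e')" "\<gamma>' \<in> \<Gamma>" "e' \<in> errs \<gamma>'"
      by (auto simp: errs_disj_def)
    show "case x of (\<gamma>', e') \<Rightarrow> (\<gamma>', e') \<noteq> (\<gamma>0, e) \<longrightarrow> syndrome \<M> e' \<noteq> syndrome \<M> e"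
      unfolding x(1) prod.case
    proof (intro impI notI)
      assume "(\<gamma>', e') \<noteq> (\<gamma>0, e)" "syndrome \<M> e' = syndrome \<M> e"
      then show False
        using exists_indistinguishable_if_syndrome_eq[OF P \<gamma>0 x(2) e x(3)] no_witness by metis
    qed
  qed
next
  assume "\<forall>e\<in>errs \<gamma>0. syndrome \<M> e \<noteq> trivial_syndrome \<and>
        (\<forall>(\<gamma>', e')\<in>errs_disj \<Gamma>. (\<gamma>', e') \<noteq> (\<gamma>0, e) \<longrightarrow> syndrome \<M> e' \<noteq> syndrome \<M> e)"
  then show "learnable n \<Gamma> \<M> (\<lambda>P. P \<gamma>0)"
    using \<gamma>0 by (simp add: learnable_iff channel_eq_if_unique_syndromes)
qed

section \<open>Syndrome class error rates\<close>

lemma finite_errs: "\<gamma> \<in> \<Gamma> \<Longrightarrow> finite (errs \<gamma>)"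
  by (simp add: errs_def finite_supported_in finite_support)

lemma rate_norm_sq_eq_sum: "G \<subseteq> \<Gamma> \<Longrightarrow> rate_norm_sq G P = (\<Sum>\<gamma>\<in>G. \<Sum>e\<in>errs \<gamma>. (P \<gamma> e)\<^sup>2)"
  unfolding rate_norm_sq_def
  by (rule sum.Sigma[symmetric]) (auto intro: finite_subset[OF _ finite_\<Gamma>] finite_errs)

lemma syndrome_estimate_minus_class_rate:
  assumes P: "admissible \<Gamma> P" and e0: "finite (supp e0)" "syndrome \<M> e0 \<noteq> trivial_syndrome"
  shows "syndrome_estimate e0 P - class_rate (synd_class \<Gamma> \<M> e0) P
    = (\<Sum>\<gamma>\<in>class_supports (synd_class \<Gamma> \<M> e0).
         \<Sum>e\<in>{e\<in>errs \<gamma>. syndrome \<M> e = syndrome \<M> e0}. log_coeff \<gamma> (P \<gamma>) e - P \<gamma> e)"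
proof -
  have "class_rate (synd_class \<Gamma> \<M> e0) P = (\<Sum>\<gamma>\<in>\<Gamma>. \<Sum>e\<in>{e\<in>errs \<gamma>. syndrome \<M> e = syndrome \<M> e0}. P \<gamma> e)"
    unfolding class_rate_def synd_class_eq_Sigma
    by (rule sum.Sigma[symmetric]) (auto simp: finite_\<Gamma> finite_errs)
  then have "syndrome_estimate e0 P - class_rate (synd_class \<Gamma> \<M> e0) P
    = (\<Sum>\<gamma>\<in>\<Gamma>. \<Sum>e\<in>{e\<in>errs \<gamma>. syndrome \<M> e = syndrome \<M> e0}. log_coeff \<gamma> (P \<gamma>) e - P \<gamma> e)"
    by (simp add: syndrome_estimate_eq_log_coeffs[OF P e0(1)] syndrome_class_in_supported_in[OF e0(2)]
        sum_subtractf)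
  also have "\<dots> = (\<Sum>\<gamma>\<in>class_supports (synd_class \<Gamma> \<M> e0).
         \<Sum>e\<in>{e\<in>errs \<gamma>. syndrome \<M> e = syndrome \<M> e0}. log_coeff \<gamma> (P \<gamma>) e - P \<gamma> e)"
  proof (rule sum.mono_neutral_right[OF finite_\<Gamma> class_supports_synd_class_subset], intro ballI)
    fix \<gamma> assume "\<gamma> \<in> \<Gamma> - class_supports (synd_class \<Gamma> \<M> e0)"
    then have empty: "{e\<in>errs \<gamma>. syndrome \<M> e = syndrome \<M> e0} = {}"
      by (simp add: class_supports_synd_class)
    show "(\<Sum>e\<in>{e\<in>errs \<gamma>. syndrome \<M> e = syndrome \<M> e0}. log_coeff \<gamma> (P \<gamma>) e - P \<gamma> e) = 0"
      unfolding empty by simp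
  qed
  finally show ?thesis .
qed

lemma class_rate_approx:
  assumes e0: "finite (supp e0)" "syndrome \<M> e0 \<noteq> trivial_syndrome"
  shows "\<exists>K \<delta>. \<delta> > 0 \<and> (\<forall>P. admissible \<Gamma> P \<longrightarrow>
           rate_norm_sq (class_supports (synd_class \<Gamma> \<M> e0)) P \<le> \<delta>\<^sup>2 \<longrightarrow>
           \<bar>syndrome_estimate e0 P - class_rate (synd_class \<Gamma> \<M> e0) P\<bar>
             \<le> K * rate_norm_sq (class_supports (synd_class \<Gamma> \<M> e0)) P)"
proof -
  let ?G = "class_supports (synd_class \<Gamma> \<M> e0)"
  note G = class_supports_synd_class_subset[of \<Gamma> \<M> e0]
  define c where "c = (\<Sum>\<gamma>\<in>\<Gamma>. real (card (errs \<gamma>)))"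
  define \<delta> where "\<delta> = 1 / (4 * (c + 1))"
  have c: "0 \<le> c" "\<And>\<gamma>. \<gamma> \<in> \<Gamma> \<Longrightarrow> real (card (errs \<gamma>)) \<le> c"
    unfolding c_def by (auto intro: sum_nonneg member_le_sum finite_\<Gamma>)
  then have "c \<le> (c + 1)\<^sup>2"
    by (simp add: power2_eq_square algebra_simps)
  then have "c / (16 * (c + 1)\<^sup>2) \<le> 1/16"
    using c(1) by (simp add: field_simps)
  moreover have "c * \<delta>\<^sup>2 = c / (16 * (c + 1)\<^sup>2)"
    unfolding \<delta>_def by (simp only: power_divide power_mult_distrib power_one) simp
  ultimately have \<delta>: "\<delta> > 0" "c * \<delta>\<^sup>2 \<le> 1/16"
    using c(1) by (simp_all add: \<delta>_def)
  have "\<bar>syndrome_estimate e0 P - class_rate (synd_class \<Gamma> \<M> e0) P\<bar> \<le> 8 * c * rate_norm_sq ?G P"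
    if P: "admissible \<Gamma> P" and small: "rate_norm_sq ?G P \<le> \<delta>\<^sup>2" for P
  proof -
    let ?S = "\<lambda>\<gamma>. \<Sum>e\<in>errs \<gamma>. (P \<gamma> e)\<^sup>2"
    have "\<bar>\<Sum>e\<in>{e\<in>errs \<gamma>. syndrome \<M> e = syndrome \<M> e0}. log_coeff \<gamma> (P \<gamma>) e - P \<gamma> e\<bar>
        \<le> 8 * c * ?S \<gamma>" if "\<gamma> \<in> ?G" for \<gamma>
    proof (rule log_coeff_class_sum_approx_norm[OF measured_subgroup _ _ e0 c(2)])
      show \<gamma>: "\<gamma> \<in> \<Gamma>" "local_admissible \<gamma> (P \<gamma>)" "finite \<gamma>"
        using that G admissibleD[OF P] finite_support by blast+
      have "?S \<gamma> \<le> rate_norm_sq ?G P"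
        unfolding rate_norm_sq_eq_sum[OF G] using that finite_subset[OF G finite_\<Gamma>]
        by (intro member_le_sum) (auto intro: sum_nonneg)
      then have "c * ?S \<gamma> \<le> c * \<delta>\<^sup>2"
        using small c(1) by (intro mult_left_mono) auto
      then show "c * ?S \<gamma> \<le> 1/16"
        using \<delta>(2) by linarith
    qed
    then have "\<bar>syndrome_estimate e0 P - class_rate (synd_class \<Gamma> \<M> e0) P\<bar> \<le> (\<Sum>\<gamma>\<in>?G. 8 * c * ?S \<gamma>)"
      unfolding syndrome_estimate_minus_class_rate[OF P e0] by (intro order_trans[OF sum_abs sum_mono])
    also have "\<dots> = 8 * c * rate_norm_sq ?G P"
      by (simp add: rate_norm_sq_eq_sum[OF G] sum_distrib_left)
    finally show ?thesis .
  qed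
  then show ?thesis
    using \<delta>(1) by blast
qed

lemma class_rates_learnable_approx:
  "\<forall>(\<gamma>0, e0)\<in>errs_disj \<Gamma>. syndrome \<M> e0 \<noteq> trivial_syndrome \<longrightarrow>
     (let C = synd_class \<Gamma> \<M> e0 in
       \<exists>Q :: (nat set \<Rightarrow> npauli \<Rightarrow> real) \<Rightarrow> real. learnable n \<Gamma> \<M> Q \<and>
         (\<exists>K \<delta>. \<delta> > 0 \<and> (\<forall>P. admissible \<Gamma> P \<longrightarrow>
            rate_norm_sq (class_supports C) P \<le> \<delta>\<^sup>2 \<longrightarrow>
            \<bar>Q P - class_rate C P\<bar> \<le> K * rate_norm_sq (class_supports C) P)))"
proof (intro ballI impI)
  fix x assume "x \<in> errs_disj \<Gamma>"
  then obtain \<gamma>0 e0 where x: "x = (\<gamma>0, e0)" "\<gamma>0 \<in> \<Gamma>" "e0 \<in> supported_in \<gamma>0"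
    by (auto simp: errs_disj_def errs_def)
  then have "finite (supp e0)"
    using finite_support finite_supp_if_supported_in by blast
  then show "case x of (\<gamma>0, e0) \<Rightarrow> syndrome \<M> e0 \<noteq> trivial_syndrome \<longrightarrow> (let C = synd_class \<Gamma> \<M> e0 in
        \<exists>Q :: (nat set \<Rightarrow> npauli \<Rightarrow> real) \<Rightarrow> real. learnable n \<Gamma> \<M> Q \<and>
          (\<exists>K \<delta>. \<delta> > 0 \<and> (\<forall>P. admissible \<Gamma> P \<longrightarrow>
             rate_norm_sq (class_supports C) P \<le> \<delta>\<^sup>2 \<longrightarrow>
             \<bar>Q P - class_rate C P\<bar> \<le> K * rate_norm_sq (class_supports C) P)))"
    unfolding x(1) prod.case Let_def
    by (intro impI exI[of _ "syndrome_estimate e0"] conjI learnable_syndrome_estimate class_rate_approx)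
qed

end

theorem theorem2:
  fixes n :: nat and \<Gamma> :: "nat set set" and \<S> \<M> :: "npauli set"
  assumes fin: "finite \<Gamma>"
    and supports: "\<forall>\<gamma>\<in>\<Gamma>. \<gamma> \<subseteq> {..<n}"
    and stab: "abelian_pauli_subgroup n \<S>"
    and meas: "pauli_subgroup n \<M>" "\<M> \<subseteq> \<S>"
  shows
    "(learnable n \<Gamma> \<M> (total_dist \<Gamma>) \<longleftrightarrow>
        (\<forall>e\<in>errs_union \<Gamma>. syndrome \<M> e \<noteq> trivial_syndrome \<and>
           (\<forall>e'\<in>errs_union \<Gamma>. e' \<noteq> e \<longrightarrow> syndrome \<M> e' \<noteq> syndrome \<M> e)))
   \<and> (\<forall>\<gamma>\<in>\<Gamma>. learnable n \<Gamma> \<M> (\<lambda>P. P \<gamma>) \<longleftrightarrow>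
        (\<forall>e\<in>errs \<gamma>. syndrome \<M> e \<noteq> trivial_syndrome \<and>
           (\<forall>(\<gamma>', e')\<in>errs_disj \<Gamma>. (\<gamma>', e') \<noteq> (\<gamma>, e) \<longrightarrow> syndrome \<M> e' \<noteq> syndrome \<M> e)))
   \<and> (\<forall>(\<gamma>0, e0)\<in>errs_disj \<Gamma>. syndrome \<M> e0 \<noteq> trivial_syndrome \<longrightarrow>
        (let C = synd_class \<Gamma> \<M> e0 in
          \<exists>Q :: (nat set \<Rightarrow> npauli \<Rightarrow> real) \<Rightarrow> real. learnable n \<Gamma> \<M> Q \<and>
            (\<exists>K \<delta>. \<delta> > 0 \<and> (\<forall>P. admissible \<Gamma> P \<longrightarrow>
               rate_norm_sq (class_supports C) P \<le> \<delta>\<^sup>2 \<longrightarrow>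
               \<bar>Q P - class_rate C P\<bar> \<le> K * rate_norm_sq (class_supports C) P))))"
proof -
  interpret syndrome_setup n \<Gamma> \<M>
    using fin supports meas(1) by unfold_locales
  show ?thesis
    by (rule conjI[OF learnable_total_dist_iff conjI[OF ballI[OF learnable_channel_iff] class_rates_learnable_approx]])
qed

end
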